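(* Let $\Omega$, $\mathcal{R}$, $\overline{C}$ be as in the context, with $\Omega$ nonempty and bounded and $\Omega\cap\mathcal{R}\ne\emptyset$. Define the set-valued map $\Gamma:\mathbb{R}\rightrightarrows\mathcal{S}^q$ by $\Gamma(w):=\{Y\in\Omega : \|Y\|_*-\|Y\|_2=w\}$, and suppose $\Gamma$ is calm at $0$ for each $Y\in\Gamma(0)$. Then there exists $\bar\rho>0$ such that for every $\rho>\bar\rho$: $Y^*$ is an optimal solution of $\min\{\langle\overline{C},Y\rangle : Y\in\Omega\cap\mathcal{R}\}$ if and only if $Y^*$ is an optimal solution of $$\min\{\,f_\rho(Y):=\langle\overline{C},Y\rangle+\rho(\|Y\|_*-\|Y\|_2) : Y\in\Omega\}.$$
   Context: $\mathcal{S}^q$ is the space of real symmetric $q\times q$ matrices with trace inner product and Frobenius norm; $\mathcal{S}^q_+$ the positive semidefinite cone; $\mathcal{N}^q$ the entrywise nonnegative matrices in $\mathcal{S}^q$. Given $\overline{C}\in\mathcal{S}^q$, a linear map $\mathcal{A}:\mathcal{S}^q\to\mathbb{R}^m$ and $b\in\mathbb{R}^m$, $\Omega:=\{Y\in\mathcal{S}^q_+\cap\mathcal{N}^q : \mathcal{A}(Y)=b\}$ and $\mathcal{R}:=\{Y\in\mathcal{S}^q:\operatorname{rank}(Y)\le1\}$. $\|Y\|_*$ is the nuclear norm (sum of singular values) and $\|Y\|_2$ the spectral norm (largest singular value). A set-valued map $\Psi:\mathcal{X}\rightrightarrows\mathcal{Z}$ between Euclidean spaces is calm at $\bar x$ for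 $\bar z\in\Psi(\bar x)$ if there exist $\alpha>0$ and neighborhoods $\mathcal{U}$ of $\bar x$, $\mathcal{V}$ of $\bar z$ with $\Psi(x)\cap\mathcal{V}\subseteq\Psi(\bar x)+\alpha\|x-\bar x\|\mathbb{B}$ for all $x\in\mathcal{U}$, where $\mathbb{B}$ is the closed unit ball. *)

theory Defs
  imports "Jordan_Normal_Form.Char_Poly" "Jordan_Normal_Form.DL_Rank"
begin

definition symm_mats :: "nat \<Rightarrow> real mat set" where
  "symm_mats q = {Y. Y \<in> carrier_mat q q \<and> transpose_mat Y = Y}"

definition trace_inner :: "real mat \<Rightarrow> real mat \<Rightarrow> real" where
  "trace_inner X Y = (\<Sum>i<dim_row Y. (transpose_mat X * Y) $$ (i, i))"

definition frob_norm :: "real mat \<Rightarrow> real" where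
  "frob_norm X = sqrt (trace_inner X X)"

definition psd_cone :: "nat \<Rightarrow> real mat set" where
  "psd_cone q = {Y \<in> symm_mats q. \<forall>x \<in> carrier_vec q. 0 \<le> x \<bullet> (Y *\<^sub>v x)}"

definition nonneg_mats :: "nat \<Rightarrow> real mat set" where
  "nonneg_mats q = {Y \<in> symm_mats q. \<forall>i<q. \<forall>j<q. 0 \<le> Y $$ (i, j)}"

text \<open>Singular values (with multiplicity): square roots of the eigenvalues of Y^T Y,
  i.e. of the roots of its characteristic polynomial (which splits over the reals).\<close>
definition singular_values :: "real mat \<Rightarrow> real multiset" where
  "singular_values Y = image_mset sqrt (proots (char_poly (transpose_mat Y * Y)))"

definition nuclear_norm :: "real mat \<Rightarrow> real" where
  "nuclear_norm Y = sum_mset (singular_values Y)"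

text \<open>Largest singular value (0 for the degenerate 0 x 0 matrix).\<close>
definition spectral_norm :: "real mat \<Rightarrow> real" where
  "spectral_norm Y = Max (insert 0 (set_mset (singular_values Y)))"

definition linear_map_Sq :: "nat \<Rightarrow> nat \<Rightarrow> (real mat \<Rightarrow> real vec) \<Rightarrow> bool" where
  "linear_map_Sq q m A \<longleftrightarrow>
     (\<forall>X \<in> symm_mats q. A X \<in> carrier_vec m) \<and>
     (\<forall>X \<in> symm_mats q. \<forall>Y \<in> symm_mats q. A (X + Y) = A X + A Y) \<and>
     (\<forall>X \<in> symm_mats q. \<forall>c::real. A (c \<cdot>\<^sub>m X) = c \<cdot>\<^sub>v A X)"

definition Omega_set :: "nat \<Rightarrow> (real mat \<Rightarrow> real vec) \<Rightarrow> real vec \<Rightarrow> real mat set" where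
  "Omega_set q A b = {Y \<in> psd_cone q \<inter> nonneg_mats q. A Y = b}"

definition rank_le1_set :: "nat \<Rightarrow> real mat set" where
  "rank_le1_set q = {Y \<in> symm_mats q. vec_space.rank q Y \<le> 1}"

definition calm_at :: "(real \<Rightarrow> real mat set) \<Rightarrow> real \<Rightarrow> real mat \<Rightarrow> bool" where
  "calm_at Psi xb zb \<longleftrightarrow>
     (\<exists>\<alpha>>0. \<exists>\<epsilon>>0. \<exists>\<delta>>0. \<forall>x. \<bar>x - xb\<bar> < \<epsilon> \<longrightarrow>
        (\<forall>Y \<in> Psi x. frob_norm (Y - zb) < \<delta> \<longrightarrow>
           (\<exists>Z \<in> Psi xb. frob_norm (Y - Z) \<le> \<alpha> * \<bar>x - xb\<bar>)))"

definition is_min_on :: "(real mat \<Rightarrow> real) \<Rightarrow> real mat set \<Rightarrow> real mat \<Rightarrow> bool" where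
  "is_min_on f K Y \<longleftrightarrow> Y \<in> K \<and> (\<forall>Z \<in> K. f Y \<le> f Z)"

end

theory Submission
  imports Defs "Jordan_Normal_Form.DL_Rank_Submatrix"
begin

text \<open>On the feasible set the rank gap g Y = nuclear_norm Y - spectral_norm Y is nonnegative and
  vanishes exactly at the matrices of rank at most one, because for a positive semidefinite matrix
  both norms are read off its eigenvalues. Calmness of the level sets of g at every zero, together
  with compactness of the feasible set, gives a global error bound: every feasible Y lies within
  distance kappa * g Y of a feasible matrix of rank at most one. The linear objective is Lipschitz,
  say with constant L, so for rho > L * kappa passing from Y to that matrix never increases the
  penalized objective, and the penalty is exact.\<close>

section \<open>Spectral decomposition of real symmetric matrices\<close>

text \<open>In the spectral theory below, square matrices are functions on index pairs; in a spectral
  decomposition p k is the k-th eigenvector and d k its eigenvalue.\<close>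

definition orthonormal_rows :: "nat \<Rightarrow> (nat \<Rightarrow> nat \<Rightarrow> real) \<Rightarrow> bool" where
  "orthonormal_rows n p \<longleftrightarrow> (\<forall>k<n. \<forall>l<n. (\<Sum>i<n. p k i * p l i) = (if k = l then 1 else 0))"

definition orthonormal_cols :: "nat \<Rightarrow> (nat \<Rightarrow> nat \<Rightarrow> real) \<Rightarrow> bool" where
  "orthonormal_cols n p \<longleftrightarrow> (\<forall>i<n. \<forall>j<n. (\<Sum>k<n. p k i * p k j) = (if i = j then 1 else 0))"

lemmas mult_delta_simps = if_distrib[where f = "\<lambda>x. x * _"] if_distrib[where f = "\<lambda>x. _ * x"]

lemma reflection_orthonormal_rows:
  fixes w :: "nat \<Rightarrow> real"
  assumes cs: "c * c * (\<Sum>i<n. w i * w i) = 2 * c"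
  shows "orthonormal_rows n (\<lambda>k i. (if k = i then 1 else 0) - c * w k * w i)"
  unfolding orthonormal_rows_def
proof (intro allI impI)
  fix k l assume k: "k < n" and l: "l < n"
  let ?h = "\<lambda>k i. (if k = i then 1 else 0) - c * w k * w i"
  have eq: "?h k i * ?h l i = (if k = i then 1 else 0) * (if l = i then 1 else 0)
       - c * w l * ((if k = i then 1 else 0) * w i) - c * w k * (w i * (if i = l then 1 else 0))
       + c * c * w k * w l * (w i * w i)" for i
    by (auto simp: algebra_simps)
  have "(\<Sum>i<n. ?h k i * ?h l i) = (\<Sum>i<n. (if k = i then 1 else 0) * (if l = i then 1 else 0))
       - c * w l * (\<Sum>i<n. (if k = i then 1 else 0) * w i) - c * w k * (\<Sum>i<n. w i * (if i = l then 1 else 0))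
       + c * c * w k * w l * (\<Sum>i<n. w i * w i)"
    unfolding eq by (simp add: sum.distrib sum_subtractf sum_distrib_left)
  also have "\<dots> = (if k = l then 1 else 0) - c * w l * w k - c * w k * w l
      + (c * c * (\<Sum>i<n. w i * w i)) * w k * w l"
    using k l by (simp add: mult_delta_simps cong: if_cong)
  also have "\<dots> = (if k = l then 1 else 0)" unfolding cs by (simp add: algebra_simps)
  finally show "(\<Sum>i<n. ?h k i * ?h l i) = (if k = l then 1 else 0)" .
qed

text \<open>The witness is the Householder reflection I - c w w^T with w = u - e_0, which maps e_0 to u.\<close>
lemma orthonormal_completion:
  assumes u: "(\<Sum>i<n. u i * u i) = (1::real)" and n: "0 < n"
  shows "\<exists>h. orthonormal_rows n h \<and> orthonormal_cols n h \<and> (\<forall>i<n. h 0 i = u i)"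
proof -
  define w where "w i = u i - (if i = 0 then 1 else 0)" for i
  define s where "s = (\<Sum>i<n. w i * w i)"
  define c where "c = (if s = 0 then 0 else 2 / s)"
  define h where "h k i = (if k = i then 1 else 0) - c * w k * w i" for k i
  have "c * c * s = 2 * c" unfolding c_def by (auto simp: field_simps)
  hence orth: "orthonormal_rows n h"
    unfolding h_def s_def by (rule reflection_orthonormal_rows)
  have "h k i = h i k" for k i unfolding h_def by auto
  hence compl: "orthonormal_cols n h"
    using orth unfolding orthonormal_rows_def orthonormal_cols_def by simp
  have s_eq: "s = 2 - 2 * u 0"
  proof -
    have "w i * w i = u i * u i - 2 * ((if i = 0 then 1 else 0) * u i) + (if i = 0 then 1 else 0)" for i
      unfolding w_def by (cases "i = 0") (auto simp: algebra_simps mult_2)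
    hence "s = (\<Sum>i<n. u i * u i) - 2 * (\<Sum>i<n. (if 0 = i then 1 else 0) * u i) + (\<Sum>i<n. (if i = 0 then 1 else 0))"
      unfolding s_def by (simp add: sum.distrib sum_subtractf sum_distrib_left)
    also have "\<dots> = 2 - 2 * u 0" using n u by (simp add: mult_delta_simps cong: if_cong)
    finally show ?thesis .
  qed
  have h0: "h 0 i = u i" if i: "i < n" for i
  proof (cases "s = 0")
    case True
    have "\<forall>j\<in>{..<n}. w j * w j = 0"
      using True unfolding s_def by (subst sum_nonneg_eq_0_iff[symmetric]) auto
    hence "w i = 0" using i by auto
    thus ?thesis using True unfolding h_def c_def w_def by auto
  next
    case False
    have cw: "c * w 0 = -1" using False s_eq unfolding c_def w_def by (auto simp: field_simps)
    have "h 0 i = (if 0 = i then 1 else 0) - (c * w 0) * w i" unfolding h_def by simp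
    also have "\<dots> = (if 0 = i then 1 else 0) + w i" unfolding cw by simp
    finally show ?thesis unfolding w_def by auto
  qed
  show ?thesis using orth compl h0 by blast
qed

lemma complex_eigenvector_exists:
  fixes n :: nat and a :: "nat \<Rightarrow> nat \<Rightarrow> real"
  assumes n: "0 < n"
  shows "\<exists>c v. (\<exists>i<n. v i \<noteq> 0) \<and> (\<forall>i<n. (\<Sum>j<n. complex_of_real (a i j) * v j) = c * v i)"
proof -
  define Ac where "Ac = mat n n (\<lambda>(i,j). complex_of_real (a i j))"
  have Ac: "Ac \<in> carrier_mat n n" unfolding Ac_def by simp
  obtain as where cp: "char_poly Ac = (\<Prod>a\<leftarrow>as. [:- a, 1:])" and len: "length as = n"
    using char_poly_factorized[OF Ac] by blast
  from len n obtain c rest where as: "as = c # rest" by (cases as) auto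
  have "poly (char_poly Ac) c = 0" unfolding cp as by simp
  hence "eigenvalue Ac c" using eigenvalue_root_char_poly[OF Ac] by simp
  then obtain v where ev: "eigenvector Ac v c" unfolding eigenvalue_def by blast
  hence v: "v \<in> carrier_vec n" and v0: "v \<noteq> 0\<^sub>v n" and eq: "Ac *\<^sub>v v = c \<cdot>\<^sub>v v"
    unfolding eigenvector_def using Ac by auto
  have "\<exists>i<n. v $ i \<noteq> 0"
  proof (rule ccontr)
    assume "\<not> ?thesis"
    hence "v = 0\<^sub>v n" using v by (intro eq_vecI) auto
    with v0 show False by simp
  qed
  moreover have "(\<Sum>j<n. complex_of_real (a i j) * v $ j) = c * v $ i" if i: "i < n" for i
  proof -
    have "(Ac *\<^sub>v v) $ i = (c \<cdot>\<^sub>v v) $ i" using eq by simp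
    thus ?thesis using i v unfolding Ac_def
      by (auto simp: scalar_prod_def row_def lessThan_atLeast0)
  qed
  ultimately show ?thesis by blast
qed

lemma unit_eigenvector_of_nonzero:
  fixes n :: nat and a :: "nat \<Rightarrow> nat \<Rightarrow> real"
  assumes nz: "\<exists>i<n. r i \<noteq> 0" and eq: "\<forall>i<n. (\<Sum>j<n. a i j * r j) = e * r i"
  shows "\<exists>u. (\<Sum>i<n. u i * u i) = (1::real) \<and> (\<forall>i<n. (\<Sum>j<n. a i j * u j) = e * u i)"
proof -
  define N where "N = (\<Sum>i<n. r i * r i)"
  obtain i0 where i0: "i0 < n" "r i0 \<noteq> 0" using nz by blast
  have "r i0 * r i0 \<le> N" unfolding N_def
    by (rule member_le_sum) (use i0 in auto)
  moreover have "r i0 * r i0 > 0" using i0(2) not_real_square_gt_zero by blast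
  ultimately have Npos: "N > 0" by linarith
  define u where "u i = r i / sqrt N" for i
  have "(\<Sum>i<n. u i * u i) = (\<Sum>i<n. r i * r i) / N"
    unfolding u_def using Npos by (simp add: sum_divide_distrib[symmetric] real_sqrt_mult[symmetric])
  also have "\<dots> = 1" using Npos unfolding N_def by simp
  finally have unit: "(\<Sum>i<n. u i * u i) = 1" .
  have eig: "\<forall>i<n. (\<Sum>j<n. a i j * u j) = e * u i"
  proof (intro allI impI)
    fix i assume i: "i < n"
    have "(\<Sum>j<n. a i j * u j) = (\<Sum>j<n. a i j * r j) / sqrt N"
      unfolding u_def by (simp add: sum_divide_distrib)
    also have "\<dots> = e * u i" using eq i unfolding u_def by simp
    finally show "(\<Sum>j<n. a i j * u j) = e * u i" .
  qed
  show ?thesis using unit eig by blast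
qed

text \<open>The Rayleigh quotient of an eigenvector of a real symmetric matrix is real, hence so is the
  eigenvalue.\<close>
lemma symmetric_eigenvalue_real:
  fixes n :: nat and a :: "nat \<Rightarrow> nat \<Rightarrow> real"
  assumes sym: "\<forall>i<n. \<forall>j<n. a i j = a j i" and nz: "\<exists>i<n. v i \<noteq> 0"
    and eq: "\<forall>i<n. (\<Sum>j<n. complex_of_real (a i j) * v j) = c * v i"
  shows "Im c = 0"
proof -
  define s where "s = (\<Sum>i<n. cnj (v i) * (\<Sum>j<n. complex_of_real (a i j) * v j))"
  define R where "R = (\<Sum>i<n. (cmod (v i))^2)"
  have "s = (\<Sum>i<n. c * (v i * cnj (v i)))" unfolding s_def
    by (rule sum.cong) (use eq in \<open>auto simp: algebra_simps\<close>)
  also have "\<dots> = c * complex_of_real R" unfolding R_def of_real_sum sum_distrib_left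
    by (intro sum.cong refl) (simp only: complex_norm_square)
  finally have s_eq: "s = c * complex_of_real R" .
  have "cnj s = (\<Sum>i<n. v i * (\<Sum>j<n. complex_of_real (a i j) * cnj (v j)))"
    unfolding s_def by (simp add: cnj_sum)
  also have "\<dots> = (\<Sum>i<n. \<Sum>j<n. v i * complex_of_real (a i j) * cnj (v j))"
    by (simp add: sum_distrib_left mult.assoc)
  also have "\<dots> = (\<Sum>j<n. \<Sum>i<n. v i * complex_of_real (a i j) * cnj (v j))"
    by (rule sum.swap)
  also have "\<dots> = (\<Sum>j<n. \<Sum>i<n. cnj (v j) * (complex_of_real (a j i) * v i))"
    by (intro sum.cong refl) (use sym in \<open>auto simp: algebra_simps\<close>)
  also have "\<dots> = s" unfolding s_def by (simp add: sum_distrib_left)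
  finally have "Im (cnj s) = Im s" by simp
  hence imR: "Im c * R = 0" using s_eq by simp
  obtain i0 where i0: "i0 < n" "v i0 \<noteq> 0" using nz by blast
  have "(cmod (v i0))^2 \<le> R" unfolding R_def by (rule member_le_sum) (use i0 in auto)
  moreover have "(cmod (v i0))^2 > 0" using i0 by simp
  ultimately have "R > 0" by linarith
  with imR show ?thesis by simp
qed

lemma symmetric_unit_eigenvector:
  fixes n :: nat and a :: "nat \<Rightarrow> nat \<Rightarrow> real"
  assumes sym: "\<forall>i<n. \<forall>j<n. a i j = a j i" and n: "0 < n"
  shows "\<exists>e u. (\<Sum>i<n. u i * u i) = (1::real) \<and> (\<forall>i<n. (\<Sum>j<n. a i j * u j) = e * u i)"
proof -
  obtain c v where nz: "\<exists>i<n. v i \<noteq> 0"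
    and eq: "\<forall>i<n. (\<Sum>j<n. complex_of_real (a i j) * v j) = c * v i"
    using complex_eigenvector_exists[OF n] by blast
  have imc0: "Im c = 0" by (rule symmetric_eigenvalue_real[OF sym nz eq])
  obtain i0 where i0: "i0 < n" "v i0 \<noteq> 0" using nz by blast
  have re_eq: "\<forall>i<n. (\<Sum>j<n. a i j * Re (v j)) = Re c * Re (v i)"
  proof (intro allI impI)
    fix i assume "i < n"
    hence "Re (\<Sum>j<n. complex_of_real (a i j) * v j) = Re (c * v i)" using eq by simp
    thus "(\<Sum>j<n. a i j * Re (v j)) = Re c * Re (v i)" using imc0 by (simp add: Re_sum)
  qed
  have im_eq: "\<forall>i<n. (\<Sum>j<n. a i j * Im (v j)) = Re c * Im (v i)"
  proof (intro allI impI)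
    fix i assume "i < n"
    hence "Im (\<Sum>j<n. complex_of_real (a i j) * v j) = Im (c * v i)" using eq by simp
    thus "(\<Sum>j<n. a i j * Im (v j)) = Re c * Im (v i)" using imc0 by (simp add: Im_sum)
  qed
  show ?thesis
  proof (cases "Re (v i0) = 0")
    case True
    hence "Im (v i0) \<noteq> 0" using i0 complex_eq_iff by force
    thus ?thesis using unit_eigenvector_of_nonzero[of n "\<lambda>j. Im (v j)" a "Re c"] im_eq i0 by blast
  next
    case False
    thus ?thesis using unit_eigenvector_of_nonzero[of n "\<lambda>j. Re (v j)" a "Re c"] re_eq i0 by blast
  qed
qed

lemma sum_swap3: "(\<Sum>k<(m::nat). \<Sum>l<(m'::nat). \<Sum>r<(N::nat). F k l r) = (\<Sum>r<N. \<Sum>k<m. \<Sum>l<m'. (F k l r::real))"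
proof -
  have "(\<Sum>k<m. \<Sum>l<m'. \<Sum>r<N. F k l r) = (\<Sum>k<m. \<Sum>r<N. \<Sum>l<m'. F k l r)"
    by (rule sum.cong[OF refl], rule sum.swap)
  also have "\<dots> = (\<Sum>r<N. \<Sum>k<m. \<Sum>l<m'. F k l r)" by (rule sum.swap)
  finally show ?thesis .
qed

lemma sum_bilinear_factor:
  "(\<Sum>k<(m::nat). \<Sum>l<(m'::nat). x k * (\<Sum>r<(N::nat). c r k * c' r l) * y l) =
   (\<Sum>r<N. (\<Sum>k<m. c r k * x k) * (\<Sum>l<m'. c' r l * (y l::real)))"
proof -
  have "(\<Sum>k<m. \<Sum>l<m'. x k * (\<Sum>r<N. c r k * c' r l) * y l) =
        (\<Sum>k<m. \<Sum>l<m'. \<Sum>r<N. (c r k * x k) * (c' r l * y l))"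
    by (intro sum.cong refl) (simp add: sum_distrib_left sum_distrib_right algebra_simps)
  also have "\<dots> = (\<Sum>r<N. \<Sum>k<m. \<Sum>l<m'. (c r k * x k) * (c' r l * y l))" by (rule sum_swap3)
  also have "\<dots> = (\<Sum>r<N. (\<Sum>k<m. c r k * x k) * (\<Sum>l<m'. c' r l * y l))"
    by (simp add: sum_product)
  finally show ?thesis .
qed

lemma orthonormal_cols_expansion:
  fixes a h :: "nat \<Rightarrow> nat \<Rightarrow> real"
  assumes c: "orthonormal_cols n h" and i: "i < n" and j: "j < n"
  shows "a i j = (\<Sum>k<n. \<Sum>l<n. h k i * (\<Sum>r<n. \<Sum>s<n. h k r * a r s * h l s) * h l j)"
proof -
  have "(\<Sum>k<n. \<Sum>l<n. h k i * (\<Sum>r<n. \<Sum>s<n. h k r * a r s * h l s) * h l j) =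
        (\<Sum>k<n. \<Sum>l<n. \<Sum>r<n. \<Sum>s<n. (h k i * h k r) * a r s * (h l j * h l s))"
    by (intro sum.cong refl) (simp add: sum_distrib_left sum_distrib_right algebra_simps)
  also have "\<dots> = (\<Sum>r<n. \<Sum>k<n. \<Sum>l<n. \<Sum>s<n. (h k i * h k r) * a r s * (h l j * h l s))"
    by (rule sum_swap3)
  also have "\<dots> = (\<Sum>r<n. \<Sum>s<n. \<Sum>k<n. \<Sum>l<n. (h k i * h k r) * a r s * (h l j * h l s))"
    by (rule sum.cong[OF refl], rule sum_swap3)
  also have "\<dots> = (\<Sum>r<n. \<Sum>s<n. (\<Sum>k<n. h k i * h k r) * a r s * (\<Sum>l<n. h l j * h l s))"
    by (simp add: sum_distrib_left sum_distrib_right algebra_simps sum_product)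
  also have "\<dots> = (\<Sum>r<n. \<Sum>s<n. (if i = r then 1 else 0) * a r s * (if j = s then 1 else 0))"
    using c i j unfolding orthonormal_cols_def by (intro sum.cong refl) auto
  also have "\<dots> = a i j" using i j by (simp add: mult_delta_simps cong: if_cong)
  finally show ?thesis by simp
qed

lemma sum_bilinear_swap:
  "(\<Sum>i<(n::nat). (\<Sum>a<(m::nat). x a * g a i) * (\<Sum>b<(m'::nat). y b * g' b i)) =
   (\<Sum>a<m. \<Sum>b<m'. x a * y b * (\<Sum>i<n. g a i * (g' b i::real)))"
proof -
  have "(\<Sum>i<n. (\<Sum>a<m. x a * g a i) * (\<Sum>b<m'. y b * g' b i)) =
        (\<Sum>i<n. \<Sum>a<m. \<Sum>b<m'. x a * y b * (g a i * g' b i))"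
    by (simp add: sum_product algebra_simps)
  also have "\<dots> = (\<Sum>a<m. \<Sum>b<m'. \<Sum>i<n. x a * y b * (g a i * g' b i))"
    by (rule sum_swap3[symmetric])
  also have "\<dots> = (\<Sum>a<m. \<Sum>b<m'. x a * y b * (\<Sum>i<n. g a i * g' b i))"
    by (simp add: sum_distrib_left)
  finally show ?thesis .
qed

lemma sum_linear_swap:
  "(\<Sum>i<(n::nat). f i * (\<Sum>b<(m::nat). y b * g b i)) = (\<Sum>b<m. y b * (\<Sum>i<n. f i * (g b i::real)))"
proof -
  have "(\<Sum>i<n. f i * (\<Sum>b<m. y b * g b i)) = (\<Sum>i<n. \<Sum>b<m. y b * (f i * g b i))"
    by (simp add: sum_distrib_left algebra_simps)
  also have "\<dots> = (\<Sum>b<m. \<Sum>i<n. y b * (f i * g b i))" by (rule sum.swap)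
  finally show ?thesis by (simp add: sum_distrib_left)
qed

text \<open>Rows 1..m of h span the orthogonal complement of row 0; a basis p of that complement,
  given in these coordinates, is mapped back to the standard coordinates.\<close>
definition extend_basis ::
    "nat \<Rightarrow> (nat \<Rightarrow> nat \<Rightarrow> real) \<Rightarrow> (nat \<Rightarrow> nat \<Rightarrow> real) \<Rightarrow> nat \<Rightarrow> nat \<Rightarrow> real" where
  "extend_basis m h p k i = (case k of 0 \<Rightarrow> h 0 i | Suc r \<Rightarrow> (\<Sum>l<m. p r l * h (Suc l) i))"

lemma extend_basis_simps [simp]:
  "extend_basis m h p 0 i = h 0 i"
  "extend_basis m h p (Suc r) i = (\<Sum>l<m. p r l * h (Suc l) i)"
  unfolding extend_basis_def by simp_all

lemma orthonormal_rows_extend_basis: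
  assumes oh: "orthonormal_rows (Suc m) h" and op: "orthonormal_rows m p"
  shows "orthonormal_rows (Suc m) (extend_basis m h p)"
  unfolding orthonormal_rows_def
proof (intro allI impI)
  fix k l assume k: "k < Suc m" and l: "l < Suc m"
  let ?p = "extend_basis m h p"
  have hS: "(\<Sum>i<Suc m. h (Suc a) i * h (Suc b) i) = (if a = b then 1 else 0)" if "a < m" "b < m" for a b
    using oh that unfolding orthonormal_rows_def by auto
  have h0S: "(\<Sum>i<Suc m. h 0 i * h (Suc b) i) = 0" if "b < m" for b
    using oh that unfolding orthonormal_rows_def by auto
  have p0S: "(\<Sum>i<Suc m. h 0 i * ?p (Suc r) i) = 0" for r
    by (simp add: sum_linear_swap h0S del: sum.lessThan_Suc)
  show "(\<Sum>i<Suc m. ?p k i * ?p l i) = (if k = l then 1 else 0)"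
  proof (cases k; cases l)
    assume "k = 0" "l = 0"
    thus ?thesis using oh unfolding orthonormal_rows_def by simp
  next
    fix r' assume "k = 0" "l = Suc r'"
    thus ?thesis using p0S by simp
  next
    fix r assume "k = Suc r" "l = 0"
    thus ?thesis using p0S[of r] by (simp add: mult.commute)
  next
    fix r r' assume kr: "k = Suc r" and lr: "l = Suc r'"
    have "(\<Sum>i<Suc m. ?p k i * ?p l i)
        = (\<Sum>a<m. \<Sum>b<m. p r a * p r' b * (\<Sum>i<Suc m. h (Suc a) i * h (Suc b) i))"
      unfolding kr lr extend_basis_simps by (rule sum_bilinear_swap)
    also have "\<dots> = (\<Sum>a<m. \<Sum>b<m. p r a * p r' b * (if a = b then 1 else 0))"
      using hS by (intro sum.cong refl) auto
    also have "\<dots> = (\<Sum>a<m. p r a * p r' a)" by (simp add: mult_delta_simps cong: if_cong)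
    also have "\<dots> = (if r = r' then 1 else 0)"
      using op k l kr lr unfolding orthonormal_rows_def by simp
    finally show ?thesis using kr lr by simp
  qed
qed

lemma orthonormal_cols_extend_basis:
  assumes ch: "orthonormal_cols (Suc m) h" and cp: "orthonormal_cols m p"
  shows "orthonormal_cols (Suc m) (extend_basis m h p)"
  unfolding orthonormal_cols_def
proof (intro allI impI)
  fix i j assume i: "i < Suc m" and j: "j < Suc m"
  have "(\<Sum>k<Suc m. extend_basis m h p k i * extend_basis m h p k j)
      = h 0 i * h 0 j + (\<Sum>a<m. \<Sum>b<m. h (Suc a) i * (\<Sum>r<m. p r a * p r b) * h (Suc b) j)"
    unfolding sum.lessThan_Suc_shift extend_basis_simps sum_bilinear_factor ..
  also have "\<dots> = h 0 i * h 0 j + (\<Sum>a<m. \<Sum>b<m. h (Suc a) i * h (Suc b) j * (if a = b then 1 else 0))"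
    using cp unfolding orthonormal_cols_def by (intro arg_cong2[where f = "(+)"] sum.cong refl) auto
  also have "\<dots> = (\<Sum>k<Suc m. h k i * h k j)"
    unfolding sum.lessThan_Suc_shift by (simp add: mult_delta_simps cong: if_cong)
  also have "\<dots> = (if i = j then 1 else 0)" using ch i j unfolding orthonormal_cols_def by simp
  finally show "(\<Sum>k<Suc m. extend_basis m h p k i * extend_basis m h p k j) = (if i = j then 1 else 0)" .
qed

text \<open>In a basis whose first vector is an eigenvector, the matrix B of a symmetric form is
  block diagonal, so a spectral decomposition of its lower block extends to the whole form.\<close>
lemma extend_basis_decomposition:
  fixes B h p :: "nat \<Rightarrow> nat \<Rightarrow> real"
  assumes B0: "\<And>l. l < Suc m \<Longrightarrow> B 0 l = e * (if 0 = l then 1 else 0)"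
    and Bsym: "\<And>k l. B k l = B l k"
    and B': "\<forall>i<m. \<forall>j<m. B (Suc i) (Suc j) = (\<Sum>k<m. d k * p k i * p k j)"
  shows "(\<Sum>k<Suc m. \<Sum>l<Suc m. h k i * B k l * h l j)
       = (\<Sum>k<Suc m. (case k of 0 \<Rightarrow> e | Suc r \<Rightarrow> d r) * extend_basis m h p k i * extend_basis m h p k j)"
proof -
  have "(\<Sum>l<Suc m. h 0 i * B 0 l * h l j) = (\<Sum>l<Suc m. (if l = 0 then 1 else 0) * (e * h 0 i * h l j))"
    using B0 by (intro sum.cong refl) auto
  also have "\<dots> = e * h 0 i * h 0 j" by (simp add: mult_delta_simps cong: if_cong)
  finally have first_row: "(\<Sum>l<Suc m. h 0 i * B 0 l * h l j) = e * h 0 i * h 0 j" .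
  have "(\<Sum>k<m. \<Sum>l<Suc m. h (Suc k) i * B (Suc k) l * h l j)
      = (\<Sum>k<m. \<Sum>l<m. h (Suc k) i * B (Suc k) (Suc l) * h (Suc l) j)"
  proof (rule sum.cong[OF refl])
    fix k assume "k \<in> {..<m}"
    hence "B (Suc k) 0 = 0" using B0[of "Suc k"] Bsym[of "Suc k" 0] by simp
    thus "(\<Sum>l<Suc m. h (Suc k) i * B (Suc k) l * h l j) = (\<Sum>l<m. h (Suc k) i * B (Suc k) (Suc l) * h (Suc l) j)"
      unfolding sum.lessThan_Suc_shift by simp
  qed
  also have "\<dots> = (\<Sum>k<m. \<Sum>l<m. h (Suc k) i * (\<Sum>r<m. (d r * p r k) * p r l) * h (Suc l) j)"
    using B' by (intro sum.cong refl) (auto simp: mult.assoc)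
  also have "\<dots> = (\<Sum>r<m. (\<Sum>k<m. d r * p r k * h (Suc k) i) * (\<Sum>l<m. p r l * h (Suc l) j))"
    by (rule sum_bilinear_factor)
  also have "\<dots> = (\<Sum>r<m. d r * extend_basis m h p (Suc r) i * extend_basis m h p (Suc r) j)"
    by (simp add: sum_distrib_left mult.assoc)
  finally have other_rows: "(\<Sum>k<m. \<Sum>l<Suc m. h (Suc k) i * B (Suc k) l * h l j)
      = (\<Sum>r<m. d r * extend_basis m h p (Suc r) i * extend_basis m h p (Suc r) j)" .
  show ?thesis
    unfolding sum.lessThan_Suc_shift[of "\<lambda>k. \<Sum>l<Suc m. h k i * B k l * h l j"]
      sum.lessThan_Suc_shift[of "\<lambda>k. (case k of 0 \<Rightarrow> e | Suc r \<Rightarrow> d r) * extend_basis m h p k i * extend_basis m h p k j"]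
    using first_row other_rows by (simp del: sum.lessThan_Suc)
qed

lemma rotated_form_first_row:
  fixes a h :: "nat \<Rightarrow> nat \<Rightarrow> real"
  assumes sym: "\<forall>i<n. \<forall>j<n. a i j = a j i" and oh: "orthonormal_rows n h"
    and eu: "\<forall>i<n. (\<Sum>j<n. a i j * h 0 j) = e * h 0 i" and l: "l < n" and n: "0 < n"
  shows "(\<Sum>r<n. \<Sum>s<n. h 0 r * a r s * h l s) = e * (if 0 = l then 1 else 0)"
proof -
  have "(\<Sum>r<n. \<Sum>s<n. h 0 r * a r s * h l s) = (\<Sum>s<n. (\<Sum>r<n. a s r * h 0 r) * h l s)"
  proof (subst sum.swap, rule sum.cong[OF refl])
    fix s assume s: "s \<in> {..<n}"
    show "(\<Sum>r<n. h 0 r * a r s * h l s) = (\<Sum>r<n. a s r * h 0 r) * h l s"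
      unfolding sum_distrib_right by (rule sum.cong[OF refl]) (use sym s in auto)
  qed
  also have "\<dots> = e * (\<Sum>s<n. h 0 s * h l s)"
    using eu by (auto intro!: sum.cong simp: sum_distrib_left algebra_simps)
  also have "\<dots> = e * (if 0 = l then 1 else 0)" using oh l n unfolding orthonormal_rows_def by simp
  finally show ?thesis .
qed

theorem symmetric_spectral_decomposition:
  fixes n :: nat and a :: "nat \<Rightarrow> nat \<Rightarrow> real"
  assumes "\<forall>i<n. \<forall>j<n. a i j = a j i"
  shows "\<exists>p d. orthonormal_rows n p \<and> orthonormal_cols n p \<and> (\<forall>i<n. \<forall>j<n. a i j = (\<Sum>k<n. d k * p k i * p k j))"
  using assms
proof (induction n arbitrary: a)
  case 0
  show ?case unfolding orthonormal_rows_def orthonormal_cols_def by auto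
next
  case (Suc m)
  note sym = Suc.prems
  obtain e u where u1: "(\<Sum>i<Suc m. u i * u i) = 1" and eu: "\<forall>i<Suc m. (\<Sum>j<Suc m. a i j * u j) = e * u i"
    using symmetric_unit_eigenvector[OF sym] by auto
  obtain h where oh: "orthonormal_rows (Suc m) h" and ch: "orthonormal_cols (Suc m) h"
    and h0: "\<forall>i<Suc m. h 0 i = u i"
    using orthonormal_completion[OF u1] by auto
  define b where "b k l = (\<Sum>r<Suc m. \<Sum>s<Suc m. h k r * a r s * h l s)" for k l
  have bsym: "b k l = b l k" for k l
  proof -
    have "b k l = (\<Sum>s<Suc m. \<Sum>r<Suc m. h k r * a r s * h l s)" unfolding b_def by (rule sum.swap)
    also have "\<dots> = b l k" unfolding b_def
      by (intro sum.cong refl) (use sym in \<open>auto simp: algebra_simps\<close>)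
    finally show ?thesis .
  qed
  have b0: "b 0 l = e * (if 0 = l then 1 else 0)" if "l < Suc m" for l
    unfolding b_def using rotated_form_first_row[OF sym oh _ that] eu h0 by simp
  have "\<forall>i<m. \<forall>j<m. b (Suc i) (Suc j) = b (Suc j) (Suc i)" using bsym by simp
  from Suc.IH[OF this] obtain p d where op: "orthonormal_rows m p" and cp: "orthonormal_cols m p"
    and rep: "\<forall>i<m. \<forall>j<m. b (Suc i) (Suc j) = (\<Sum>k<m. d k * p k i * p k j)" by blast
  have "a i j = (\<Sum>k<Suc m. (case k of 0 \<Rightarrow> e | Suc r \<Rightarrow> d r) * extend_basis m h p k i * extend_basis m h p k j)"
    if "i < Suc m" "j < Suc m" for i j
  proof -
    have "a i j = (\<Sum>k<Suc m. \<Sum>l<Suc m. h k i * b k l * h l j)"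
      unfolding b_def by (rule orthonormal_cols_expansion[OF ch that])
    also have "\<dots> = (\<Sum>k<Suc m. (case k of 0 \<Rightarrow> e | Suc r \<Rightarrow> d r) * extend_basis m h p k i * extend_basis m h p k j)"
      by (rule extend_basis_decomposition[OF b0 bsym rep])
    finally show ?thesis .
  qed
  thus ?case
    using orthonormal_rows_extend_basis[OF oh op] orthonormal_cols_extend_basis[OF ch cp] by blast
qed

locale spectral_repr =
  fixes n :: nat and p :: "nat \<Rightarrow> nat \<Rightarrow> real" and d :: "nat \<Rightarrow> real" and a :: "nat \<Rightarrow> nat \<Rightarrow> real"
  assumes orth: "orthonormal_rows n p" and comp: "orthonormal_cols n p"
    and rep: "\<forall>i<n. \<forall>j<n. a i j = (\<Sum>k<n. d k * p k i * p k j)"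
begin

lemma rows_orth: "k < n \<Longrightarrow> l < n \<Longrightarrow> (\<Sum>i<n. p k i * p l i) = (if k = l then 1 else 0)"
  using orth unfolding orthonormal_rows_def by auto

lemma cols_orth: "i < n \<Longrightarrow> j < n \<Longrightarrow> (\<Sum>k<n. p k i * p k j) = (if i = j then 1 else 0)"
  using comp unfolding orthonormal_cols_def by auto

lemma quadratic_form_coords: "(\<Sum>i<n. \<Sum>j<n. x i * a i j * x j) = (\<Sum>k<n. d k * (\<Sum>i<n. p k i * x i)^2)"
proof -
  have "(\<Sum>i<n. \<Sum>j<n. x i * a i j * x j) = (\<Sum>i<n. \<Sum>j<n. x i * (\<Sum>k<n. (d k * p k i) * p k j) * x j)"
    using rep by (intro sum.cong refl) (auto simp: mult.assoc)
  also have "\<dots> = (\<Sum>k<n. (\<Sum>i<n. (d k * p k i) * x i) * (\<Sum>j<n. p k j * x j))"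
    by (rule sum_bilinear_factor)
  also have "\<dots> = (\<Sum>k<n. d k * (\<Sum>i<n. p k i * x i)^2)"
  proof (rule sum.cong[OF refl])
    fix k
    have "(\<Sum>i<n. (d k * p k i) * x i) = d k * (\<Sum>i<n. p k i * x i)"
      by (simp add: sum_distrib_left mult.assoc)
    thus "(\<Sum>i<n. (d k * p k i) * x i) * (\<Sum>j<n. p k j * x j) = d k * (\<Sum>i<n. p k i * x i)^2"
      by (simp add: power2_eq_square)
  qed
  finally show ?thesis .
qed

lemma sum_sq_coords: "(\<Sum>k<n. (\<Sum>i<n. p k i * x i)^2) = (\<Sum>i<n. x i * x i)"
proof -
  have "(\<Sum>k<n. (\<Sum>i<n. p k i * x i)^2) = (\<Sum>k<n. (\<Sum>i<n. p k i * x i) * (\<Sum>j<n. p k j * x j))"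
    by (simp add: power2_eq_square)
  also have "\<dots> = (\<Sum>i<n. \<Sum>j<n. x i * (\<Sum>k<n. p k i * p k j) * x j)"
    by (rule sum_bilinear_factor[symmetric])
  also have "\<dots> = (\<Sum>i<n. \<Sum>j<n. x i * x j * (if i = j then 1 else 0))"
    using cols_orth by (intro sum.cong refl) auto
  also have "\<dots> = (\<Sum>i<n. x i * x i)" by (simp add: mult_delta_simps cong: if_cong)
  finally show ?thesis .
qed

lemma quadratic_form_eigenvector: "j < n \<Longrightarrow> (\<Sum>i<n. \<Sum>l<n. p j i * a i l * p j l) = d j"
proof -
  assume j: "j < n"
  have "(\<Sum>i<n. \<Sum>l<n. p j i * a i l * p j l) = (\<Sum>k<n. d k * (\<Sum>i<n. p k i * p j i)^2)" by (rule quadratic_form_coords)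
  also have "\<dots> = (\<Sum>k<n. (if k = j then 1 else 0) * d k)"
    using rows_orth j by (intro sum.cong refl) auto
  also have "\<dots> = d j" using j by (simp add: mult_delta_simps cong: if_cong)
  finally show ?thesis .
qed

lemma trace_eq_sum_eigenvalues: "(\<Sum>i<n. a i i) = (\<Sum>k<n. d k)"
proof -
  have "(\<Sum>i<n. a i i) = (\<Sum>i<n. \<Sum>k<n. d k * (p k i * p k i))"
    using rep by (intro sum.cong refl) (auto simp: mult.assoc)
  also have "\<dots> = (\<Sum>k<n. d k * (\<Sum>i<n. p k i * p k i))"
    by (subst sum.swap) (simp add: sum_distrib_left)
  also have "\<dots> = (\<Sum>k<n. d k)" using rows_orth by simp
  finally show ?thesis .
qed

lemma gram_entry_eq: "i < n \<Longrightarrow> j < n \<Longrightarrow> (\<Sum>r<n. a r i * a r j) = (\<Sum>k<n. (d k)^2 * p k i * p k j)"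
proof -
  assume i: "i < n" and j: "j < n"
  have "(\<Sum>r<n. a r i * a r j) = (\<Sum>r<n. (\<Sum>k<n. (d k * p k i) * p k r) * (\<Sum>l<n. (d l * p l j) * p l r))"
    using rep i j by (intro sum.cong refl) (auto simp: algebra_simps)
  also have "\<dots> = (\<Sum>k<n. \<Sum>l<n. (d k * p k i) * (d l * p l j) * (\<Sum>r<n. p k r * p l r))"
    by (rule sum_bilinear_swap)
  also have "\<dots> = (\<Sum>k<n. \<Sum>l<n. (d k * p k i) * (d l * p l j) * (if k = l then 1 else 0))"
    using rows_orth by (intro sum.cong refl) auto
  also have "\<dots> = (\<Sum>k<n. (d k * p k i) * (d k * p k j))" by (simp add: mult_delta_simps cong: if_cong)
  also have "\<dots> = (\<Sum>k<n. (d k)^2 * p k i * p k j)"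
    by (simp add: power2_eq_square algebra_simps)
  finally show ?thesis .
qed

lemma sum_sq_entries_eq: "(\<Sum>i<n. \<Sum>r<n. a r i * a r i) = (\<Sum>k<n. (d k)^2)"
proof -
  have "(\<Sum>i<n. \<Sum>r<n. a r i * a r i) = (\<Sum>i<n. \<Sum>k<n. (d k)^2 * (p k i * p k i))"
    by (rule sum.cong[OF refl]) (use gram_entry_eq in \<open>auto simp: mult.assoc\<close>)
  also have "\<dots> = (\<Sum>k<n. (d k)^2 * (\<Sum>i<n. p k i * p k i))"
    by (subst sum.swap) (simp add: sum_distrib_left)
  also have "\<dots> = (\<Sum>k<n. (d k)^2)" using rows_orth by simp
  finally show ?thesis .
qed

end

section \<open>Nuclear and spectral norm of positive semidefinite matrices\<close>

lemma quadratic_form_entries: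
  assumes Y: "Y \<in> carrier_mat q q" and x: "x \<in> carrier_vec q"
  shows "x \<bullet> (Y *\<^sub>v x) = (\<Sum>i<q. \<Sum>j<q. x $ i * Y $$ (i,j) * x $ j)"
  using Y x by (simp add: scalar_prod_def lessThan_atLeast0 sum_distrib_left mult.assoc row_def)

lemma mat_mult_entry:
  assumes "A \<in> carrier_mat q q" "B \<in> carrier_mat q q" "i < q" "j < q"
  shows "(A * B) $$ (i,j) = (\<Sum>r<q. A $$ (i,r) * B $$ (r,j))"
  using assms by (simp add: scalar_prod_def lessThan_atLeast0 row_def col_def)

lemma proots_prod_linear: "proots (\<Prod>a\<leftarrow>xs. [:- a, 1:]) = mset (xs :: real list)"
proof (induction xs)
  case (Cons a xs)
  have nz: "(\<Prod>a\<leftarrow>xs. [:- a, 1:]) \<noteq> (0::real poly)" by (auto simp: prod_list_zero_iff)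
  have "proots (\<Prod>a\<leftarrow>a # xs. [:- a, 1:]) = proots [:- a, 1:] + proots (\<Prod>a\<leftarrow>xs. [:- a, 1:])"
    unfolding list.map prod_list.Cons by (rule proots_mult) (use nz in auto)
  also have "proots [:- a, 1:] = {#a#}" using proots_linear_factor[of "-a"] by simp
  finally show ?case using Cons by simp
qed simp

lemma symm_mats_entry_commute:
  assumes "Y \<in> symm_mats q" "i < q" "j < q"
  shows "Y $$ (i,j) = Y $$ (j,i)"
proof -
  have Yc: "Y \<in> carrier_mat q q" and Yt: "transpose_mat Y = Y" using assms(1) unfolding symm_mats_def by auto
  have "transpose_mat Y $$ (j,i) = Y $$ (i,j)" using Yc assms(2,3) by simp
  thus ?thesis using Yt by simp
qed

lemma spectral_repr_eigenvector:
  assumes Yc: "Y \<in> carrier_mat q q" and sf: "spectral_repr q p d (\<lambda>i j. Y $$ (i,j))" and k: "k < q"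
  shows "vec q (p k) \<bullet> (Y *\<^sub>v vec q (p k)) = d k" and "vec q (p k) \<bullet> vec q (p k) = 1"
proof -
  interpret spectral_repr q p d "\<lambda>i j. Y $$ (i,j)" by (rule sf)
  have "vec q (p k) \<bullet> (Y *\<^sub>v vec q (p k)) = (\<Sum>i<q. \<Sum>j<q. p k i * Y $$ (i,j) * p k j)"
    unfolding quadratic_form_entries[OF Yc vec_carrier] by (intro sum.cong refl) auto
  also have "\<dots> = d k" by (rule quadratic_form_eigenvector[OF k])
  finally show "vec q (p k) \<bullet> (Y *\<^sub>v vec q (p k)) = d k" .
  show "vec q (p k) \<bullet> vec q (p k) = 1"
    using rows_orth[OF k k] by (simp add: scalar_prod_def lessThan_atLeast0)
qed

lemma psd_spectral_repr:
  assumes Y: "Y \<in> psd_cone q"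
  obtains p d where "spectral_repr q p d (\<lambda>i j. Y $$ (i,j))" and "\<forall>k<q. 0 \<le> d k"
proof -
  have Ys: "Y \<in> symm_mats q" and Yc: "Y \<in> carrier_mat q q"
    using Y unfolding psd_cone_def symm_mats_def by auto
  have "\<forall>i<q. \<forall>j<q. Y $$ (i,j) = Y $$ (j,i)" using symm_mats_entry_commute[OF Ys] by blast
  from symmetric_spectral_decomposition[OF this] obtain p d
    where sf: "spectral_repr q p d (\<lambda>i j. Y $$ (i,j))"
    unfolding spectral_repr_def by blast
  have "0 \<le> d k" if "k < q" for k
  proof -
    have "0 \<le> vec q (p k) \<bullet> (Y *\<^sub>v vec q (p k))" using Y vec_carrier unfolding psd_cone_def by blast
    thus ?thesis using spectral_repr_eigenvector(1)[OF Yc sf that] by simp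
  qed
  with sf that show ?thesis by blast
qed

lemma orthonormal_cols_mat_mult_transpose:
  assumes "orthonormal_cols q p"
  shows "mat q q (\<lambda>(i,k). p k i) * transpose_mat (mat q q (\<lambda>(i,k). p k i)) = 1\<^sub>m q"
proof (rule eq_matI)
  let ?P = "mat q q (\<lambda>(i,k). p k i)"
  fix i j assume "i < dim_row (1\<^sub>m q)" "j < dim_col (1\<^sub>m q)"
  hence i: "i < q" and j: "j < q" by auto
  have "(?P * transpose_mat ?P) $$ (i,j) = (\<Sum>r<q. ?P $$ (i,r) * transpose_mat ?P $$ (r,j))"
    by (rule mat_mult_entry) (use i j in auto)
  also have "\<dots> = (\<Sum>k<q. p k i * p k j)" by (rule sum.cong[OF refl]) (use i j in auto)
  also have "\<dots> = 1\<^sub>m q $$ (i,j)" using assms i j unfolding orthonormal_cols_def by simp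
  finally show "(?P * transpose_mat ?P) $$ (i,j) = 1\<^sub>m q $$ (i,j)" .
qed auto

lemma orthonormal_rows_transpose_mat_mult:
  assumes "orthonormal_rows q p"
  shows "transpose_mat (mat q q (\<lambda>(i,k). p k i)) * mat q q (\<lambda>(i,k). p k i) = 1\<^sub>m q"
proof (rule eq_matI)
  let ?P = "mat q q (\<lambda>(i,k). p k i)"
  fix i j assume "i < dim_row (1\<^sub>m q)" "j < dim_col (1\<^sub>m q)"
  hence i: "i < q" and j: "j < q" by auto
  have "(transpose_mat ?P * ?P) $$ (i,j) = (\<Sum>r<q. transpose_mat ?P $$ (i,r) * ?P $$ (r,j))"
    by (rule mat_mult_entry) (use i j in auto)
  also have "\<dots> = (\<Sum>k<q. p i k * p j k)" by (rule sum.cong[OF refl]) (use i j in auto)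
  also have "\<dots> = 1\<^sub>m q $$ (i,j)" using assms i j unfolding orthonormal_rows_def by simp
  finally show "(transpose_mat ?P * ?P) $$ (i,j) = 1\<^sub>m q $$ (i,j)" .
qed auto

lemma singular_values_spectral_repr:
  assumes Yc: "Y \<in> carrier_mat q q" and sf: "spectral_repr q p d (\<lambda>i j. Y $$ (i,j))"
  shows "singular_values Y = mset (map (\<lambda>k. \<bar>d k\<bar>) [0..<q])"
proof -
  interpret spectral_repr q p d "\<lambda>i j. Y $$ (i,j)" by (rule sf)
  define P where "P = mat q q (\<lambda>(i,k). p k i)"
  define D2 where "D2 = mat q q (\<lambda>(k,l). if k = l then (d k)^2 else 0)"
  have P: "P \<in> carrier_mat q q" and D2: "D2 \<in> carrier_mat q q" and Pt: "transpose_mat P \<in> carrier_mat q q"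
    unfolding P_def D2_def by auto
  have YtY: "transpose_mat Y * Y \<in> carrier_mat q q" using Yc by simp
  have PD: "(P * D2) $$ (i,l) = p l i * (d l)^2" if "i < q" "l < q" for i l
  proof -
    have "(P * D2) $$ (i,l) = (\<Sum>k<q. p k i * (if k = l then (d k)^2 else 0))"
      using that P D2 unfolding mat_mult_entry[OF P D2 that] by (simp add: P_def D2_def)
    also have "\<dots> = (\<Sum>k<q. (p k i * (d k)^2) * (if k = l then 1 else 0))"
      by (intro sum.cong refl) auto
    also have "\<dots> = p l i * (d l)^2" using that by (simp add: mult_delta_simps cong: if_cong)
    finally show ?thesis .
  qed
  have eq: "transpose_mat Y * Y = P * D2 * transpose_mat P"
  proof (rule eq_matI)
    fix i j assume i: "i < dim_row (P * D2 * transpose_mat P)" and j: "j < dim_col (P * D2 * transpose_mat P)"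
    hence i: "i < q" and j: "j < q" using P by auto
    have "(transpose_mat Y * Y) $$ (i,j) = (\<Sum>r<q. Y $$ (r,i) * Y $$ (r,j))"
      using mat_mult_entry[OF _ Yc i j, of "transpose_mat Y"] Yc i by simp
    also have "\<dots> = (\<Sum>k<q. (d k)^2 * p k i * p k j)" by (rule gram_entry_eq[OF i j])
    also have "\<dots> = (\<Sum>l<q. (P * D2) $$ (i,l) * transpose_mat P $$ (l,j))"
      using PD i j by (intro sum.cong refl) (auto simp: P_def algebra_simps)
    also have "\<dots> = (P * D2 * transpose_mat P) $$ (i,j)"
      using mat_mult_entry[OF _ Pt i j, of "P * D2"] P D2 by simp
    finally show "(transpose_mat Y * Y) $$ (i,j) = (P * D2 * transpose_mat P) $$ (i,j)" .
  qed (use P Yc in auto)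
  have PPt: "P * transpose_mat P = 1\<^sub>m q"
    unfolding P_def by (rule orthonormal_cols_mat_mult_transpose[OF comp])
  have PtP: "transpose_mat P * P = 1\<^sub>m q"
    unfolding P_def by (rule orthonormal_rows_transpose_mat_mult[OF orth])
  have "similar_mat_wit (transpose_mat Y * Y) D2 P (transpose_mat P)"
    unfolding similar_mat_wit_def Let_def using YtY D2 P Pt PPt PtP eq Yc by auto
  hence "char_poly (transpose_mat Y * Y) = char_poly D2"
    by (intro char_poly_similar) (auto simp: similar_mat_def)
  also have "char_poly D2 = (\<Prod>a\<leftarrow>diag_mat D2. [:- a, 1:])"
    by (rule char_poly_upper_triangular[OF D2]) (auto simp: upper_triangular_def D2_def)
  also have "diag_mat D2 = map (\<lambda>k. (d k)^2) [0..<q]"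
    unfolding diag_mat_def D2_def by auto
  finally have cp: "char_poly (transpose_mat Y * Y) = (\<Prod>a\<leftarrow>map (\<lambda>k. (d k)^2) [0..<q]. [:- a, 1:])" .
  show ?thesis
    unfolding singular_values_def cp proots_prod_linear by (simp add: mset_map multiset.map_comp o_def)
qed

lemma det_1x1: "(B::'a::comm_ring_1 mat) \<in> carrier_mat 1 1 \<Longrightarrow> det B = B $$ (0,0)"
  by (subst det_upper_triangular[of B 1]) (auto simp: upper_triangular_def diag_mat_def)

lemma det_2x2: assumes "(A::'a::comm_ring_1 mat) \<in> carrier_mat 2 2"
  shows "det A = A$$(0,0)*A$$(1,1) - A$$(0,1)*A$$(1,0)"
proof -
  have "det A = (\<Sum>i<2. A $$ (i,0) * cofactor A i 0)"
    by (rule laplace_expansion_column[OF assms]) simp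
  also have "\<dots> = A$$(0,0)*A$$(1,1) - A$$(0,1)*A$$(1,0)"
    using assms by (simp add: cofactor_def det_1x1 mat_delete_def numeral_2_eq_2 lessThan_Suc)
  finally show ?thesis .
qed

lemma pick_doubleton: assumes "i < (j::nat)" shows "pick {i,j} 0 = i" "pick {i,j} (Suc 0) = j"
proof -
  show p0: "pick {i,j} 0 = i" unfolding pick.simps by (rule Least_equality) (use assms in auto)
  show "pick {i,j} (Suc 0) = j" unfolding pick.simps p0[unfolded pick.simps]
    by (rule Least_equality) (use assms in auto)
qed

lemma rank_le_1_minor_eq_0:
  assumes Y: "(Y::real mat) \<in> carrier_mat q q" and r: "vec_space.rank q Y \<le> 1"
    and ij: "i < j" "j < q"
  shows "Y $$ (i,i) * Y $$ (j,j) - Y $$ (i,j) * Y $$ (j,i) = 0"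
proof (rule ccontr)
  assume ne: "Y $$ (i,i) * Y $$ (j,j) - Y $$ (i,j) * Y $$ (j,i) \<noteq> 0"
  have cardI: "card {a. a < q \<and> a \<in> {i,j}} = 2"
  proof -
    have "{a. a < q \<and> a \<in> {i,j}} = {i,j}" using ij by auto
    thus ?thesis using ij by simp
  qed
  have S: "submatrix Y {i,j} {i,j} \<in> carrier_mat 2 2"
    using Y cardI unfolding carrier_mat_def by (simp add: dim_submatrix)
  have idx: "submatrix Y {i,j} {i,j} $$ (a,b) = Y $$ (pick {i,j} a, pick {i,j} b)" if "a < 2" "b < 2" for a b
    by (rule submatrix_index) (use that Y cardI in auto)
  have "det (submatrix Y {i,j} {i,j}) = Y $$ (i,i) * Y $$ (j,j) - Y $$ (i,j) * Y $$ (j,i)"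
    unfolding det_2x2[OF S] using idx[of 0 0] idx[of 0 1] idx[of 1 0] idx[of 1 1] pick_doubleton[OF ij(1)] by simp
  with ne have "det (submatrix Y {i,j} {i,j}) \<noteq> 0" by simp
  from vec_space.rank_gt_minor[OF Y this] have "card {a. a < q \<and> a \<in> {i,j}} \<le> vec_space.rank q Y" .
  with cardI r show False by simp
qed

lemma spectral_norm_nonneg: "0 \<le> spectral_norm Y"
  unfolding spectral_norm_def by (intro Max_ge) auto

text \<open>For positive semidefinite matrices the singular values are the eigenvalues, so both
  norms are read off a spectral decomposition.\<close>
lemma psd_eigen_norms:
  assumes Y: "Y \<in> psd_cone q"
  obtains p d where "spectral_repr q p d (\<lambda>i j. Y $$ (i,j))" and "\<forall>k<q. 0 \<le> d k"
    and "nuclear_norm Y = (\<Sum>k<q. d k)" and "\<forall>k<q. d k \<le> spectral_norm Y"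
    and "spectral_norm Y = 0 \<or> (\<exists>k<q. d k = spectral_norm Y)"
proof -
  have Yc: "Y \<in> carrier_mat q q" using Y unfolding psd_cone_def symm_mats_def by auto
  obtain p d where sf: "spectral_repr q p d (\<lambda>i j. Y $$ (i,j))" and dnn: "\<forall>k<q. 0 \<le> d k"
    using psd_spectral_repr[OF Y] by blast
  have "singular_values Y = mset (map (\<lambda>k. \<bar>d k\<bar>) [0..<q])"
    by (rule singular_values_spectral_repr[OF Yc sf])
  also have "map (\<lambda>k. \<bar>d k\<bar>) [0..<q] = map d [0..<q]" using dnn by auto
  finally have sv: "singular_values Y = mset (map d [0..<q])" .
  have nuc: "nuclear_norm Y = (\<Sum>k<q. d k)" unfolding nuclear_norm_def sv
    by (simp add: sum_unfold_sum_mset lessThan_atLeast0)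
  have spec: "spectral_norm Y = Max (insert 0 (d ` {..<q}))"
    unfolding spectral_norm_def sv by (simp add: lessThan_atLeast0)
  have le: "\<forall>k<q. d k \<le> spectral_norm Y" unfolding spec by (auto intro: Max_ge)
  have "spectral_norm Y \<in> insert 0 (d ` {..<q})" unfolding spec by (intro Max_in) auto
  hence "spectral_norm Y = 0 \<or> (\<exists>k<q. d k = spectral_norm Y)" by auto
  with that[OF sf dnn nuc le] show ?thesis by blast
qed

lemma psd_nuclear_norm_eq_trace:
  assumes "Y \<in> psd_cone q"
  shows "nuclear_norm Y = (\<Sum>i<q. Y $$ (i,i))"
proof (rule psd_eigen_norms[OF assms])
  fix p d assume sf: "spectral_repr q p d (\<lambda>i j. Y $$ (i,j))" and nuc: "nuclear_norm Y = (\<Sum>k<q. d k)"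
  show ?thesis using spectral_repr.trace_eq_sum_eigenvalues[OF sf] nuc by simp
qed

lemma psd_quadratic_form_le_spectral_norm:
  assumes Y: "Y \<in> psd_cone q" and x: "x \<in> carrier_vec q"
  shows "x \<bullet> (Y *\<^sub>v x) \<le> spectral_norm Y * (x \<bullet> x)"
proof (rule psd_eigen_norms[OF Y])
  fix p d assume sf: "spectral_repr q p d (\<lambda>i j. Y $$ (i,j))" and le: "\<forall>k<q. d k \<le> spectral_norm Y"
  interpret spectral_repr q p d "\<lambda>i j. Y $$ (i,j)" by (rule sf)
  have Yc: "Y \<in> carrier_mat q q" using Y unfolding psd_cone_def symm_mats_def by auto
  have "x \<bullet> (Y *\<^sub>v x) = (\<Sum>k<q. d k * (\<Sum>i<q. p k i * x $ i)^2)"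
    unfolding quadratic_form_entries[OF Yc x] by (rule quadratic_form_coords)
  also have "\<dots> \<le> (\<Sum>k<q. spectral_norm Y * (\<Sum>i<q. p k i * x $ i)^2)"
    using le by (intro sum_mono mult_right_mono) auto
  also have "\<dots> = spectral_norm Y * (\<Sum>i<q. x $ i * x $ i)"
    by (simp add: sum_distrib_left[symmetric] sum_sq_coords)
  also have "(\<Sum>i<q. x $ i * x $ i) = x \<bullet> x" using x by (simp add: scalar_prod_def lessThan_atLeast0)
  finally show ?thesis .
qed

lemma psd_spectral_norm_attained:
  assumes Y: "Y \<in> psd_cone q"
  obtains x where "x \<in> carrier_vec q" and "x \<bullet> x \<le> 1" and "x \<bullet> (Y *\<^sub>v x) = spectral_norm Y"
proof (rule psd_eigen_norms[OF Y])
  fix p d assume sf: "spectral_repr q p d (\<lambda>i j. Y $$ (i,j))"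
    and att: "spectral_norm Y = 0 \<or> (\<exists>k<q. d k = spectral_norm Y)"
  have Yc: "Y \<in> carrier_mat q q" using Y unfolding psd_cone_def symm_mats_def by auto
  from att show ?thesis
  proof
    assume "spectral_norm Y = 0"
    show ?thesis by (rule that[of "0\<^sub>v q"]) (use \<open>spectral_norm Y = 0\<close> Yc in auto)
  next
    assume "\<exists>k<q. d k = spectral_norm Y"
    then obtain k where k: "k < q" "d k = spectral_norm Y" by blast
    show ?thesis
      by (rule that[OF vec_carrier]) (use spectral_repr_eigenvector[OF Yc sf k(1)] k(2) in auto)
  qed
qed

lemma psd_spectral_norm_le_nuclear_norm:
  assumes Y: "Y \<in> psd_cone q"
  shows "spectral_norm Y \<le> nuclear_norm Y"
proof (rule psd_eigen_norms[OF Y])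
  fix p d assume dnn: "\<forall>k<q. 0 \<le> d k" and nuc: "nuclear_norm Y = (\<Sum>k<q. d k)"
    and att: "spectral_norm Y = 0 \<or> (\<exists>k<q. d k = spectral_norm Y)"
  from att show ?thesis
  proof
    assume "spectral_norm Y = 0"
    thus ?thesis using nuc dnn by (auto intro: sum_nonneg)
  next
    assume "\<exists>k<q. d k = spectral_norm Y"
    then obtain k where k: "k < q" "d k = spectral_norm Y" by blast
    have "d k \<le> (\<Sum>k<q. d k)" by (rule member_le_sum) (use k dnn in auto)
    thus ?thesis using k nuc by simp
  qed
qed

text \<open>Equality of the two norms forces all eigenvalues but one to vanish.\<close>
lemma psd_rank_le_1_if_nuclear_eq_spectral:
  assumes Y: "Y \<in> psd_cone q" and eq: "nuclear_norm Y = spectral_norm Y"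
  shows "vec_space.rank q Y \<le> 1"
proof (rule psd_eigen_norms[OF Y])
  fix p d assume sf: "spectral_repr q p d (\<lambda>i j. Y $$ (i,j))" and dnn: "\<forall>k<q. 0 \<le> d k"
    and nuc: "nuclear_norm Y = (\<Sum>k<q. d k)"
    and att: "spectral_norm Y = 0 \<or> (\<exists>k<q. d k = spectral_norm Y)"
  interpret spectral_repr q p d "\<lambda>i j. Y $$ (i,j)" by (rule sf)
  have Yc: "Y \<in> carrier_mat q q" using Y unfolding psd_cone_def symm_mats_def by auto
  have "\<exists>j. \<forall>k<q. k \<noteq> j \<longrightarrow> d k = 0"
    using att
  proof
    assume "spectral_norm Y = 0"
    hence "\<forall>k\<in>{..<q}. d k = 0" using eq nuc dnn by (subst sum_nonneg_eq_0_iff[symmetric]) auto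
    thus ?thesis by auto
  next
    assume "\<exists>k<q. d k = spectral_norm Y"
    then obtain j where j: "j < q" "d j = spectral_norm Y" by blast
    have "(\<Sum>k<q. d k) = d j + (\<Sum>k\<in>{..<q} - {j}. d k)" using j by (simp add: sum.remove)
    hence "(\<Sum>k\<in>{..<q} - {j}. d k) = 0" using eq nuc j by simp
    hence "\<forall>k\<in>{..<q} - {j}. d k = 0" using dnn by (subst sum_nonneg_eq_0_iff[symmetric]) auto
    thus ?thesis by auto
  qed
  then obtain j where jz: "\<forall>k<q. k \<noteq> j \<longrightarrow> d k = 0" by blast
  have "Y $$ (a,b) = (d j * p j a) * (if j < q then p j b else 0)" if "a < q" "b < q" for a b
  proof -
    have "Y $$ (a,b) = (\<Sum>k<q. d k * p k a * p k b)" using rep that by simp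
    also have "\<dots> = (\<Sum>k<q. if k = j then d j * p j a * p j b else 0)"
      using jz by (intro sum.cong refl) auto
    also have "\<dots> = (d j * p j a) * (if j < q then p j b else 0)" by (simp add: sum.delta)
    finally show ?thesis .
  qed
  thus ?thesis by (intro vec_space.rank_le_1_product_entries[OF Yc]) (use Yc in auto)
qed

text \<open>Rank at most one makes all 2x2 minors vanish, so (trace Y)^2 equals the squared
  Frobenius norm, the sum of the squared eigenvalues, which is at most spectral_norm Y * trace Y.\<close>
lemma psd_nuclear_eq_spectral_if_rank_le_1:
  assumes Y: "Y \<in> psd_cone q" and r: "vec_space.rank q Y \<le> 1"
  shows "nuclear_norm Y = spectral_norm Y"
proof (rule psd_eigen_norms[OF Y])
  fix p d assume sf: "spectral_repr q p d (\<lambda>i j. Y $$ (i,j))" and dnn: "\<forall>k<q. 0 \<le> d k"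
    and nuc: "nuclear_norm Y = (\<Sum>k<q. d k)" and le: "\<forall>k<q. d k \<le> spectral_norm Y"
  interpret spectral_repr q p d "\<lambda>i j. Y $$ (i,j)" by (rule sf)
  have Ys: "Y \<in> symm_mats q" and Yc: "Y \<in> carrier_mat q q"
    using Y unfolding psd_cone_def symm_mats_def by auto
  have minor: "Y $$ (r,r) * Y $$ (i,i) = Y $$ (r,i) * Y $$ (r,i)" if "r < q" "i < q" for r i
  proof (cases r i rule: linorder_cases)
    case less
    from rank_le_1_minor_eq_0[OF Yc \<open>vec_space.rank q Y \<le> 1\<close> less \<open>i < q\<close>]
    show ?thesis using symm_mats_entry_commute[OF Ys that] by simp
  next
    case greater
    from rank_le_1_minor_eq_0[OF Yc \<open>vec_space.rank q Y \<le> 1\<close> greater \<open>r < q\<close>]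
    show ?thesis using symm_mats_entry_commute[OF Ys that] by (simp add: mult.commute)
  qed simp
  have "nuclear_norm Y * nuclear_norm Y = (\<Sum>i<q. \<Sum>r<q. Y $$ (r,r) * Y $$ (i,i))"
    unfolding nuc trace_eq_sum_eigenvalues[symmetric] by (simp add: sum_product mult.commute)
  also have "\<dots> = (\<Sum>i<q. \<Sum>r<q. Y $$ (r,i) * Y $$ (r,i))"
    using minor by (intro sum.cong refl) auto
  also have "\<dots> = (\<Sum>k<q. (d k)^2)" by (rule sum_sq_entries_eq)
  also have "\<dots> \<le> (\<Sum>k<q. spectral_norm Y * d k)"
    by (intro sum_mono) (use le dnn in \<open>auto simp: power2_eq_square intro: mult_right_mono\<close>)
  also have "\<dots> = spectral_norm Y * nuclear_norm Y" unfolding nuc by (simp add: sum_distrib_left)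
  finally have sq: "nuclear_norm Y * nuclear_norm Y \<le> spectral_norm Y * nuclear_norm Y" .
  have le_nuc: "spectral_norm Y \<le> nuclear_norm Y" by (rule psd_spectral_norm_le_nuclear_norm[OF Y])
  have "0 \<le> spectral_norm Y" by (rule spectral_norm_nonneg)
  show ?thesis
  proof (cases "nuclear_norm Y = 0")
    case True
    thus ?thesis using le_nuc \<open>0 \<le> spectral_norm Y\<close> by simp
  next
    case False
    hence "0 < nuclear_norm Y" using le_nuc \<open>0 \<le> spectral_norm Y\<close> by simp
    with sq have "nuclear_norm Y \<le> spectral_norm Y" by (rule mult_right_le_imp_le)
    thus ?thesis using le_nuc by simp
  qed
qed

lemma psd_nuclear_eq_spectral_iff_rank_le_1:
  assumes "Y \<in> psd_cone q"
  shows "nuclear_norm Y = spectral_norm Y \<longleftrightarrow> vec_space.rank q Y \<le> 1"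
  using psd_rank_le_1_if_nuclear_eq_spectral psd_nuclear_eq_spectral_if_rank_le_1 assms by blast

section \<open>Compactness of the feasible set\<close>

lemma trace_inner_entries:
  assumes "X \<in> carrier_mat q q" "Y \<in> carrier_mat q q"
  shows "trace_inner X Y = (\<Sum>i<q. \<Sum>r<q. X $$ (r,i) * Y $$ (r,i))"
  unfolding trace_inner_def using assms
  by (intro sum.cong refl) (auto simp: scalar_prod_def col_def lessThan_atLeast0)

lemma frob_norm_entries:
  assumes "X \<in> carrier_mat q q"
  shows "frob_norm X = sqrt (\<Sum>i<q. \<Sum>r<q. (X $$ (r,i))^2)"
  unfolding frob_norm_def trace_inner_entries[OF assms assms] by (simp add: power2_eq_square)

lemma abs_entry_le_frob_norm:
  assumes X: "X \<in> carrier_mat q q" and r: "r < q" and i: "i < q"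
  shows "\<bar>X $$ (r,i)\<bar> \<le> frob_norm X"
proof -
  have "(X $$ (r,i))^2 \<le> (\<Sum>r'<q. (X $$ (r',i))^2)"
    by (rule member_le_sum) (use r in auto)
  also have "\<dots> \<le> (\<Sum>i'<q. \<Sum>r'<q. (X $$ (r',i'))^2)"
    by (rule member_le_sum[where f = "\<lambda>i'. \<Sum>r'<q. (X $$ (r',i'))^2"]) (use i in \<open>auto intro: sum_nonneg\<close>)
  finally have "sqrt ((X $$ (r,i))^2) \<le> frob_norm X"
    unfolding frob_norm_entries[OF X] by (rule real_sqrt_le_mono)
  thus ?thesis by simp
qed

definition mat_tendsto :: "nat \<Rightarrow> (nat \<Rightarrow> real mat) \<Rightarrow> real mat \<Rightarrow> bool" where
  "mat_tendsto q Ys L \<longleftrightarrow> (\<forall>i<q. \<forall>j<q. (\<lambda>k. Ys k $$ (i,j)) \<longlonglongrightarrow> L $$ (i,j))"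

lemma bounded_seq_convergent_subseq:
  fixes s :: "nat \<Rightarrow> real"
  assumes "\<forall>k. \<bar>s k\<bar> \<le> B"
  shows "\<exists>r. strict_mono r \<and> convergent (s \<circ> r)"
proof -
  obtain r where r: "strict_mono r" "monoseq (\<lambda>k. s (r k))" using seq_monosub by blast
  have "Bseq (\<lambda>k. s (r k))" using assms by (intro BseqI'[of _ B]) auto
  hence "convergent (\<lambda>k. s (r k))" using r(2) Bseq_monoseq_convergent by blast
  thus ?thesis using r(1) by (auto simp: o_def)
qed

lemma bounded_family_convergent_subseq:
  fixes f :: "nat \<Rightarrow> 'a \<Rightarrow> real"
  assumes "finite I" and "\<forall>k. \<forall>x\<in>I. \<bar>f k x\<bar> \<le> B"
  shows "\<exists>r. strict_mono r \<and> (\<forall>x\<in>I. convergent (\<lambda>k. f (r k) x))"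
  using assms
proof (induction I rule: finite_induct)
  case empty
  show ?case by (rule exI[of _ id]) (auto simp: strict_mono_def)
next
  case (insert x I)
  from insert.IH insert.prems obtain r1 where r1: "strict_mono r1" "\<forall>y\<in>I. convergent (\<lambda>k. f (r1 k) y)"
    by auto
  have "\<forall>k. \<bar>f (r1 k) x\<bar> \<le> B" using insert.prems by auto
  from bounded_seq_convergent_subseq[OF this] obtain r2 where r2: "strict_mono r2" "convergent ((\<lambda>k. f (r1 k) x) \<circ> r2)"
    by blast
  have "strict_mono (r1 \<circ> r2)" using r1(1) r2(1) by (simp add: strict_mono_o)
  moreover have "\<forall>y\<in>insert x I. convergent (\<lambda>k. f ((r1 \<circ> r2) k) y)"
  proof
    fix y assume "y \<in> insert x I"
    then consider "y = x" | "y \<in> I" by auto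
    thus "convergent (\<lambda>k. f ((r1 \<circ> r2) k) y)"
    proof cases
      case 1 thus ?thesis using r2(2) by (simp add: o_def)
    next
      case 2
      then obtain l where "(\<lambda>k. f (r1 k) y) \<longlonglongrightarrow> l" using r1(2) convergent_def by blast
      from LIMSEQ_subseq_LIMSEQ[OF this r2(1)] show ?thesis
        by (auto simp: convergent_def o_def)
    qed
  qed
  ultimately show ?case by blast
qed

lemma bounded_mat_seq_convergent_subseq:
  fixes Ys :: "nat \<Rightarrow> real mat"
  assumes "\<forall>k. \<forall>i<q. \<forall>j<q. \<bar>Ys k $$ (i,j)\<bar> \<le> B"
  shows "\<exists>r L. strict_mono r \<and> L \<in> carrier_mat q q \<and> mat_tendsto q (Ys \<circ> r) L"
proof -
  have "\<forall>k. \<forall>x\<in>{..<q} \<times> {..<q}. \<bar>Ys k $$ x\<bar> \<le> B" using assms by auto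
  from bounded_family_convergent_subseq[of "{..<q} \<times> {..<q}" "\<lambda>k x. Ys k $$ x" B] this obtain r where r: "strict_mono r"
    and c: "\<forall>x\<in>{..<q} \<times> {..<q}. convergent (\<lambda>k. Ys (r k) $$ x)" by auto
  define L where "L = mat q q (\<lambda>x. lim (\<lambda>k. Ys (r k) $$ x))"
  have "mat_tendsto q (Ys \<circ> r) L" unfolding mat_tendsto_def L_def
    using c by (auto simp: convergent_LIMSEQ_iff)
  moreover have "L \<in> carrier_mat q q" unfolding L_def by simp
  ultimately show ?thesis using r by blast
qed

text \<open>The matrices (E_ij + E_ji) / 2 span the symmetric matrices; expanding A in them shows that
  the constraint map depends continuously on the entries.\<close>
definition sym_unit_mat :: "nat \<Rightarrow> nat \<Rightarrow> nat \<Rightarrow> real mat" where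
  "sym_unit_mat q i j = mat q q (\<lambda>(a,b). ((if a = i \<and> b = j then 1 else 0) + (if a = j \<and> b = i then 1 else 0)) / 2)"

lemma sym_unit_mat_symm: "sym_unit_mat q i j \<in> symm_mats q"
proof -
  have "transpose_mat (sym_unit_mat q i j) = sym_unit_mat q i j"
  proof (rule eq_matI)
    fix a b assume "a < dim_row (sym_unit_mat q i j)" "b < dim_col (sym_unit_mat q i j)"
    hence ab: "a < q" "b < q" unfolding sym_unit_mat_def by auto
    have "transpose_mat (sym_unit_mat q i j) $$ (a,b) = sym_unit_mat q i j $$ (b,a)" using ab unfolding sym_unit_mat_def by simp
    also have "\<dots> = ((if b = i \<and> a = j then 1 else 0) + (if b = j \<and> a = i then 1 else 0)) / 2"
      using ab unfolding sym_unit_mat_def by simp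
    also have "\<dots> = ((if a = i \<and> b = j then 1 else 0) + (if a = j \<and> b = i then 1 else 0)) / 2"
      by (simp only: conj_commute add.commute)
    also have "\<dots> = sym_unit_mat q i j $$ (a,b)" using ab unfolding sym_unit_mat_def by simp
    finally show "transpose_mat (sym_unit_mat q i j) $$ (a,b) = sym_unit_mat q i j $$ (a,b)" .
  qed (auto simp: sym_unit_mat_def)
  thus ?thesis unfolding symm_mats_def sym_unit_mat_def by simp
qed

lemma symm_mats_add: "X \<in> symm_mats q \<Longrightarrow> Y \<in> symm_mats q \<Longrightarrow> X + Y \<in> symm_mats q"
  unfolding symm_mats_def using transpose_add[of X q q Y] by auto

lemma symm_mats_smult: assumes "X \<in> symm_mats q" shows "c \<cdot>\<^sub>m X \<in> symm_mats q"
proof -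
  have "transpose_mat (c \<cdot>\<^sub>m X) = c \<cdot>\<^sub>m transpose_mat X" by (rule eq_matI) auto
  thus ?thesis using assms unfolding symm_mats_def by auto
qed

lemma symm_mats_zero: "0\<^sub>m q q \<in> symm_mats q"
  unfolding symm_mats_def by auto

lemma linear_map_Sq_zero:
  assumes A: "linear_map_Sq q m A"
  shows "A (0\<^sub>m q q) = 0\<^sub>v m"
proof -
  have c: "A (0\<^sub>m q q) \<in> carrier_vec m" using A symm_mats_zero unfolding linear_map_Sq_def by blast
  have "A ((0::real) \<cdot>\<^sub>m 0\<^sub>m q q) = 0 \<cdot>\<^sub>v A (0\<^sub>m q q)"
    using A symm_mats_zero unfolding linear_map_Sq_def by blast
  moreover have "(0::real) \<cdot>\<^sub>m 0\<^sub>m q q = 0\<^sub>m q q" by (auto intro!: eq_matI)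
  ultimately have e: "A (0\<^sub>m q q) = 0 \<cdot>\<^sub>v A (0\<^sub>m q q)" by simp
  show ?thesis
  proof (rule eq_vecI)
    fix i assume "i < dim_vec (0\<^sub>v m)"
    hence i: "i < m" by simp
    have "A (0\<^sub>m q q) $ i = (0 \<cdot>\<^sub>v A (0\<^sub>m q q)) $ i" using e by simp
    also have "\<dots> = 0" using c i by simp
    finally show "A (0\<^sub>m q q) $ i = 0\<^sub>v m $ i" using i by simp
  qed (use c in simp)
qed

lemma linear_map_Sq_foldr:
  assumes A: "linear_map_Sq q m A" and M: "\<forall>x\<in>set xs. M x \<in> symm_mats q"
  shows "foldr (\<lambda>x acc. c x \<cdot>\<^sub>m M x + acc) xs (0\<^sub>m q q) \<in> symm_mats q \<and>
         A (foldr (\<lambda>x acc. c x \<cdot>\<^sub>m M x + acc) xs (0\<^sub>m q q)) = foldr (\<lambda>x acc. c x \<cdot>\<^sub>v A (M x) + acc) xs (0\<^sub>v m)"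
  using M
proof (induction xs)
  case Nil
  show ?case using symm_mats_zero linear_map_Sq_zero[OF A] by simp
next
  case (Cons x xs)
  let ?S = "foldr (\<lambda>x acc. c x \<cdot>\<^sub>m M x + acc) xs (0\<^sub>m q q)"
  from Cons have S: "?S \<in> symm_mats q" and AS: "A ?S = foldr (\<lambda>x acc. c x \<cdot>\<^sub>v A (M x) + acc) xs (0\<^sub>v m)"
    by auto
  have Mx: "M x \<in> symm_mats q" using Cons.prems by simp
  have cM: "c x \<cdot>\<^sub>m M x \<in> symm_mats q" by (rule symm_mats_smult[OF Mx])
  have "A (c x \<cdot>\<^sub>m M x + ?S) = A (c x \<cdot>\<^sub>m M x) + A ?S"
    using A cM S unfolding linear_map_Sq_def by blast
  also have "A (c x \<cdot>\<^sub>m M x) = c x \<cdot>\<^sub>v A (M x)"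
    using A Mx unfolding linear_map_Sq_def by blast
  finally show ?case using symm_mats_add[OF cM S] AS by simp
qed

lemma foldr_mat_entry:
  assumes "\<forall>x\<in>set xs. M x \<in> carrier_mat q q" "a < q" "b < q"
  shows "foldr (\<lambda>x acc. c x \<cdot>\<^sub>m M x + acc) xs (0\<^sub>m q q) $$ (a,b) = (\<Sum>x\<leftarrow>xs. c x * M x $$ (a,b))"
proof -
  have "foldr (\<lambda>x acc. c x \<cdot>\<^sub>m M x + acc) xs (0\<^sub>m q q) \<in> carrier_mat q q \<and>
        foldr (\<lambda>x acc. c x \<cdot>\<^sub>m M x + acc) xs (0\<^sub>m q q) $$ (a,b) = (\<Sum>x\<leftarrow>xs. c x * M x $$ (a,b))"
    using assms by (induction xs) auto
  thus ?thesis by simp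
qed

lemma foldr_vec_entry:
  assumes "\<forall>x\<in>set xs. v x \<in> carrier_vec m" "t < m"
  shows "foldr (\<lambda>x acc. c x \<cdot>\<^sub>v v x + acc) xs (0\<^sub>v m) $ t = (\<Sum>x\<leftarrow>xs. c x * v x $ t)"
proof -
  have "foldr (\<lambda>x acc. c x \<cdot>\<^sub>v v x + acc) xs (0\<^sub>v m) \<in> carrier_vec m \<and>
        foldr (\<lambda>x acc. c x \<cdot>\<^sub>v v x + acc) xs (0\<^sub>v m) $ t = (\<Sum>x\<leftarrow>xs. c x * v x $ t)"
    using assms by (induction xs) auto
  thus ?thesis by simp
qed

lemma sum_list_product_upt: "(\<Sum>x\<leftarrow>List.product [0..<q] [0..<q]. (f x::real)) = (\<Sum>i<q. \<Sum>j<q. f (i,j))"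
proof -
  have "(\<Sum>x\<leftarrow>List.product [0..<q] [0..<q]. f x) = sum f (set (List.product [0..<q] [0..<q]))"
    by (rule sum_list_distinct_conv_sum_set) (simp add: distinct_product)
  also have "set (List.product [0..<q] [0..<q]) = {..<q} \<times> {..<q}" by auto
  also have "sum f ({..<q} \<times> {..<q}) = (\<Sum>i<q. \<Sum>j<q. f (i,j))"
    by (simp add: sum.cartesian_product)
  finally show ?thesis .
qed

lemma sum_double_delta:
  assumes "a < (q::nat)" "b < q"
  shows "(\<Sum>i<q. \<Sum>j<q. if i = a then if j = b then (g i j::real) else 0 else 0) = g a b"
proof -
  have "(\<Sum>j<q. if i = a then if j = b then g i j else 0 else 0) = (if i = a then g i b else 0)" for i
    using assms by (cases "i = a") simp_all
  thus ?thesis using assms by simp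
qed

lemma sum_sym_unit_mat_entry:
  assumes a: "a < q" and b: "b < q" and X: "X \<in> symm_mats q"
  shows "(\<Sum>i<q. \<Sum>j<q. X $$ (i,j) * sym_unit_mat q i j $$ (a,b)) = X $$ (a,b)"
proof -
  have Xc: "X \<in> carrier_mat q q" and Xt: "transpose_mat X = X" using X unfolding symm_mats_def by auto
  have Xs: "X $$ (b,a) = X $$ (a,b)"
  proof -
    have "transpose_mat X $$ (a,b) = X $$ (b,a)" using Xc a b by simp
    thus ?thesis using Xt by simp
  qed
  have "(\<Sum>i<q. \<Sum>j<q. X $$ (i,j) * sym_unit_mat q i j $$ (a,b)) =
        (\<Sum>i<q. \<Sum>j<q. (if i = a then (if j = b then X $$ (i,j) / 2 else 0) else 0)
                     + (if i = b then (if j = a then X $$ (i,j) / 2 else 0) else 0))"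
  proof (intro sum.cong refl)
    fix i j assume "i \<in> {..<q}" "j \<in> {..<q}"
    hence "sym_unit_mat q i j $$ (a,b) = ((if a = i \<and> b = j then 1 else 0) + (if a = j \<and> b = i then 1 else 0)) / 2"
      using a b unfolding sym_unit_mat_def by simp
    thus "X $$ (i,j) * sym_unit_mat q i j $$ (a,b) = (if i = a then (if j = b then X $$ (i,j) / 2 else 0) else 0)
                     + (if i = b then (if j = a then X $$ (i,j) / 2 else 0) else 0)"
      by (cases "i = a"; cases "j = b"; cases "i = b"; cases "j = a") auto
  qed
  also have "\<dots> = X $$ (a,b) / 2 + X $$ (b,a) / 2"
    unfolding sum.distrib using sum_double_delta[OF a b, of "\<lambda>i j. X $$ (i,j) / 2"]
      sum_double_delta[OF b a, of "\<lambda>i j. X $$ (i,j) / 2"] by simp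
  also have "\<dots> = X $$ (a,b)" using Xs by simp
  finally show ?thesis .
qed

lemma linear_map_Sq_expansion:
  assumes A: "linear_map_Sq q m A" and X: "X \<in> symm_mats q" and t: "t < m"
  shows "A X $ t = (\<Sum>i<q. \<Sum>j<q. X $$ (i,j) * A (sym_unit_mat q i j) $ t)"
proof -
  define ps where "ps = List.product [0..<q] [0..<q]"
  define F where "F = foldr (\<lambda>x acc. X $$ x \<cdot>\<^sub>m sym_unit_mat q (fst x) (snd x) + acc) ps (0\<^sub>m q q)"
  have Msym: "\<forall>x\<in>set ps. sym_unit_mat q (fst x) (snd x) \<in> symm_mats q" using sym_unit_mat_symm by blast
  have Mc: "\<forall>x\<in>set ps. sym_unit_mat q (fst x) (snd x) \<in> carrier_mat q q" using sym_unit_mat_symm unfolding symm_mats_def by blast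
  have Xc: "X \<in> carrier_mat q q" using X unfolding symm_mats_def by auto
  have FX: "F = X"
  proof (rule eq_matI)
    fix a b assume "a < dim_row X" "b < dim_col X"
    hence a: "a < q" and b: "b < q" using Xc by auto
    have "F $$ (a,b) = (\<Sum>x\<leftarrow>ps. X $$ x * sym_unit_mat q (fst x) (snd x) $$ (a,b))"
      unfolding F_def by (rule foldr_mat_entry[OF Mc a b])
    also have "\<dots> = X $$ (a,b)" unfolding ps_def sum_list_product_upt using sum_sym_unit_mat_entry[OF a b X] by simp
    finally show "F $$ (a,b) = X $$ (a,b)" .
  next
    show "dim_row F = dim_row X" "dim_col F = dim_col X"
      using linear_map_Sq_foldr[OF A Msym, of "\<lambda>x. X $$ x"] Xc unfolding F_def symm_mats_def by auto
  qed
  have "A F = foldr (\<lambda>x acc. X $$ x \<cdot>\<^sub>v A (sym_unit_mat q (fst x) (snd x)) + acc) ps (0\<^sub>v m)"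
    using linear_map_Sq_foldr[OF A Msym, of "\<lambda>x. X $$ x"] unfolding F_def by blast
  hence "A X $ t = foldr (\<lambda>x acc. X $$ x \<cdot>\<^sub>v A (sym_unit_mat q (fst x) (snd x)) + acc) ps (0\<^sub>v m) $ t"
    using FX by simp
  also have "\<dots> = (\<Sum>x\<leftarrow>ps. X $$ x * A (sym_unit_mat q (fst x) (snd x)) $ t)"
    by (rule foldr_vec_entry) (use A Msym t in \<open>auto simp: linear_map_Sq_def\<close>)
  also have "\<dots> = (\<Sum>i<q. \<Sum>j<q. X $$ (i,j) * A (sym_unit_mat q i j) $ t)"
    unfolding ps_def sum_list_product_upt by simp
  finally show ?thesis .
qed

lemma quadratic_form_tendsto:
  fixes Ys :: "nat \<Rightarrow> real mat"
  assumes "mat_tendsto q Ys L"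
  shows "(\<lambda>k. \<Sum>i<q. \<Sum>j<q. x i * Ys k $$ (i,j) * y j) \<longlonglongrightarrow> (\<Sum>i<q. \<Sum>j<q. x i * L $$ (i,j) * y j)"
  using assms unfolding mat_tendsto_def
  by (intro tendsto_sum tendsto_mult_right tendsto_mult_left) auto

lemma symm_mats_closed:
  assumes Ys: "\<forall>k. Ys k \<in> symm_mats q" and L: "L \<in> carrier_mat q q" and conv: "mat_tendsto q Ys L"
  shows "L \<in> symm_mats q"
proof -
  have "transpose_mat L = L"
  proof (rule eq_matI)
    fix i j assume "i < dim_row L" "j < dim_col L"
    hence ij: "i < q" "j < q" using L by auto
    have "(\<lambda>k. Ys k $$ (i,j)) \<longlonglongrightarrow> L $$ (i,j)" using conv ij unfolding mat_tendsto_def by blast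
    moreover have "(\<lambda>k. Ys k $$ (i,j)) = (\<lambda>k. Ys k $$ (j,i))"
      using symm_mats_entry_commute[OF Ys[rule_format] ij] by simp
    ultimately have "(\<lambda>k. Ys k $$ (j,i)) \<longlonglongrightarrow> L $$ (i,j)" by simp
    moreover have "(\<lambda>k. Ys k $$ (j,i)) \<longlonglongrightarrow> L $$ (j,i)" using conv ij unfolding mat_tendsto_def by simp
    ultimately show "transpose_mat L $$ (i,j) = L $$ (i,j)" using LIMSEQ_unique ij L by auto
  qed (use L in auto)
  thus ?thesis unfolding symm_mats_def using L by simp
qed

lemma psd_cone_closed:
  assumes Ys: "\<forall>k. Ys k \<in> psd_cone q" and L: "L \<in> symm_mats q" and conv: "mat_tendsto q Ys L"
  shows "L \<in> psd_cone q"
  unfolding psd_cone_def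
proof (intro CollectI conjI ballI L)
  fix x :: "real vec" assume x: "x \<in> carrier_vec q"
  have "0 \<le> (\<Sum>i<q. \<Sum>j<q. x $ i * Ys k $$ (i,j) * x $ j)" for k
  proof -
    have "0 \<le> x \<bullet> (Ys k *\<^sub>v x)" and "Ys k \<in> carrier_mat q q"
      using Ys x unfolding psd_cone_def symm_mats_def by blast+
    thus ?thesis using quadratic_form_entries[OF _ x] by simp
  qed
  hence "0 \<le> (\<Sum>i<q. \<Sum>j<q. x $ i * L $$ (i,j) * x $ j)"
    by (intro LIMSEQ_le_const[OF quadratic_form_tendsto[OF conv]]) auto
  thus "0 \<le> x \<bullet> (L *\<^sub>v x)" using quadratic_form_entries[OF _ x, of L] L unfolding symm_mats_def by simp
qed

lemma nonneg_mats_closed: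
  assumes Ys: "\<forall>k. Ys k \<in> nonneg_mats q" and L: "L \<in> symm_mats q" and conv: "mat_tendsto q Ys L"
  shows "L \<in> nonneg_mats q"
  unfolding nonneg_mats_def
proof (intro CollectI conjI allI impI L)
  fix i j assume ij: "i < q" "j < q"
  have nn: "\<forall>k. 0 \<le> Ys k $$ (i,j)" using Ys ij unfolding nonneg_mats_def by auto
  have "(\<lambda>k. Ys k $$ (i,j)) \<longlonglongrightarrow> L $$ (i,j)" using conv ij unfolding mat_tendsto_def by blast
  thus "0 \<le> L $$ (i,j)" by (rule LIMSEQ_le_const) (use nn in auto)
qed

lemma linear_map_Sq_eq_closed:
  assumes A: "linear_map_Sq q m A" and Ys: "\<forall>k. Ys k \<in> symm_mats q" and YA: "\<forall>k. A (Ys k) = b"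
    and L: "L \<in> symm_mats q" and conv: "mat_tendsto q Ys L"
  shows "A L = b"
proof (rule eq_vecI)
  have bc: "b \<in> carrier_vec m" using YA Ys A unfolding linear_map_Sq_def by metis
  thus "dim_vec (A L) = dim_vec b" using A L unfolding linear_map_Sq_def by auto
  fix t assume "t < dim_vec b"
  hence t: "t < m" using bc by simp
  have "(\<lambda>k. \<Sum>i<q. \<Sum>j<q. Ys k $$ (i,j) * A (sym_unit_mat q i j) $ t)
      \<longlonglongrightarrow> (\<Sum>i<q. \<Sum>j<q. L $$ (i,j) * A (sym_unit_mat q i j) $ t)"
    using conv unfolding mat_tendsto_def by (intro tendsto_sum tendsto_mult_right) auto
  moreover have "(\<Sum>i<q. \<Sum>j<q. Ys k $$ (i,j) * A (sym_unit_mat q i j) $ t) = b $ t" for k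
    using linear_map_Sq_expansion[OF A Ys[rule_format] t] YA by simp
  ultimately have "(\<lambda>k. b $ t) \<longlonglongrightarrow> (\<Sum>i<q. \<Sum>j<q. L $$ (i,j) * A (sym_unit_mat q i j) $ t)" by simp
  hence "(\<Sum>i<q. \<Sum>j<q. L $$ (i,j) * A (sym_unit_mat q i j) $ t) = b $ t"
    using LIMSEQ_unique[OF _ tendsto_const] by blast
  thus "A L $ t = b $ t" using linear_map_Sq_expansion[OF A L t] by simp
qed

lemma Omega_set_closed:
  assumes A: "linear_map_Sq q m A" and Ys: "\<forall>k. Ys k \<in> Omega_set q A b"
    and L: "L \<in> carrier_mat q q" and conv: "mat_tendsto q Ys L"
  shows "L \<in> Omega_set q A b"
proof -
  have sym: "\<forall>k. Ys k \<in> symm_mats q" and psd: "\<forall>k. Ys k \<in> psd_cone q"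
    and nn: "\<forall>k. Ys k \<in> nonneg_mats q" and eq: "\<forall>k. A (Ys k) = b"
    using Ys unfolding Omega_set_def psd_cone_def by auto
  have Ls: "L \<in> symm_mats q" by (rule symm_mats_closed[OF sym L conv])
  show ?thesis
    using psd_cone_closed[OF psd Ls conv] nonneg_mats_closed[OF nn Ls conv]
      linear_map_Sq_eq_closed[OF A sym eq Ls conv] unfolding Omega_set_def by simp
qed

section \<open>The rank gap along convergent sequences\<close>

lemma frob_norm_diff_tendsto:
  fixes Ys :: "nat \<Rightarrow> real mat"
  assumes conv: "mat_tendsto q Ys L" and Yc: "\<forall>k. Ys k \<in> carrier_mat q q"
    and L: "L \<in> carrier_mat q q" and Z: "Z \<in> carrier_mat q q"
  shows "(\<lambda>k. frob_norm (Ys k - Z)) \<longlonglongrightarrow> frob_norm (L - Z)"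
proof -
  have e1: "frob_norm (Ys k - Z) = sqrt (\<Sum>i<q. \<Sum>r<q. (Ys k $$ (r,i) - Z $$ (r,i))^2)" for k
  proof -
    have "Ys k - Z \<in> carrier_mat q q" by (rule minus_carrier_mat[OF Z])
    from frob_norm_entries[OF this] show ?thesis using Yc Z by simp
  qed
  have e2: "frob_norm (L - Z) = sqrt (\<Sum>i<q. \<Sum>r<q. (L $$ (r,i) - Z $$ (r,i))^2)"
  proof -
    have "L - Z \<in> carrier_mat q q" by (rule minus_carrier_mat[OF Z])
    from frob_norm_entries[OF this] show ?thesis using L Z by simp
  qed
  show ?thesis unfolding e1 e2 using conv unfolding mat_tendsto_def
    by (intro tendsto_real_sqrt tendsto_sum tendsto_power tendsto_diff tendsto_const) auto
qed

lemma psd_spectral_norm_le_perturb: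
  assumes X: "X \<in> psd_cone q" and Y: "Y \<in> psd_cone q"
  shows "spectral_norm X \<le> spectral_norm Y + (\<Sum>i<q. \<Sum>j<q. \<bar>X $$ (i,j) - Y $$ (i,j)\<bar>)"
proof -
  have Xc: "X \<in> carrier_mat q q" and Yc: "Y \<in> carrier_mat q q"
    using X Y unfolding psd_cone_def symm_mats_def by auto
  obtain x where x: "x \<in> carrier_vec q" "x \<bullet> x \<le> 1" "x \<bullet> (X *\<^sub>v x) = spectral_norm X"
    by (rule psd_spectral_norm_attained[OF X])
  have xi: "\<bar>x $ i\<bar> \<le> 1" if "i < q" for i
  proof -
    have "(x $ i)^2 \<le> (\<Sum>i<q. (x $ i)^2)" by (rule member_le_sum) (use that in auto)
    also have "\<dots> = x \<bullet> x" using x(1) by (simp add: scalar_prod_def lessThan_atLeast0 power2_eq_square)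
    finally have "(x $ i)^2 \<le> 1" using x(2) by simp
    thus ?thesis by (simp add: abs_square_le_1)
  qed
  have "spectral_norm X = (\<Sum>i<q. \<Sum>j<q. x $ i * X $$ (i,j) * x $ j)"
    using x(3) quadratic_form_entries[OF Xc x(1)] by simp
  also have "\<dots> = (\<Sum>i<q. \<Sum>j<q. x $ i * Y $$ (i,j) * x $ j)
                  + (\<Sum>i<q. \<Sum>j<q. x $ i * (X $$ (i,j) - Y $$ (i,j)) * x $ j)"
    by (simp add: sum.distrib[symmetric] algebra_simps)
  also have "(\<Sum>i<q. \<Sum>j<q. x $ i * Y $$ (i,j) * x $ j) \<le> spectral_norm Y"
  proof -
    have "(\<Sum>i<q. \<Sum>j<q. x $ i * Y $$ (i,j) * x $ j) = x \<bullet> (Y *\<^sub>v x)"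
      using quadratic_form_entries[OF Yc x(1)] by simp
    also have "\<dots> \<le> spectral_norm Y * (x \<bullet> x)" by (rule psd_quadratic_form_le_spectral_norm[OF Y x(1)])
    also have "\<dots> \<le> spectral_norm Y" using x(2) spectral_norm_nonneg by (simp add: mult_left_le)
    finally show ?thesis .
  qed
  also have "(\<Sum>i<q. \<Sum>j<q. x $ i * (X $$ (i,j) - Y $$ (i,j)) * x $ j)
      \<le> (\<Sum>i<q. \<Sum>j<q. \<bar>X $$ (i,j) - Y $$ (i,j)\<bar>)"
  proof (intro sum_mono)
    fix i j assume "i \<in> {..<q}" "j \<in> {..<q}"
    hence xx: "\<bar>x $ i * x $ j\<bar> \<le> 1" using xi by (simp add: abs_mult mult_le_one)
    have "x $ i * (X $$ (i,j) - Y $$ (i,j)) * x $ j \<le> \<bar>x $ i * (X $$ (i,j) - Y $$ (i,j)) * x $ j\<bar>"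
      by (rule abs_ge_self)
    also have "\<dots> = \<bar>x $ i * x $ j\<bar> * \<bar>X $$ (i,j) - Y $$ (i,j)\<bar>" by (simp add: abs_mult)
    also have "\<dots> \<le> \<bar>X $$ (i,j) - Y $$ (i,j)\<bar>" using xx by (simp add: mult_left_le_one_le)
    finally show "x $ i * (X $$ (i,j) - Y $$ (i,j)) * x $ j \<le> \<bar>X $$ (i,j) - Y $$ (i,j)\<bar>" .
  qed
  finally show ?thesis by simp
qed

text \<open>The rank gap is lower semicontinuous along sequences of PSD matrices: the nuclear norm
  (the trace) is continuous and the spectral norm is upper semicontinuous.\<close>
lemma psd_rank_gap_limit:
  fixes Ys :: "nat \<Rightarrow> real mat"
  assumes Yp: "\<forall>k. Ys k \<in> psd_cone q" and Lp: "L \<in> psd_cone q" and conv: "mat_tendsto q Ys L"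
    and g0: "(\<lambda>k. nuclear_norm (Ys k) - spectral_norm (Ys k)) \<longlonglongrightarrow> 0"
  shows "nuclear_norm L - spectral_norm L = 0"
proof -
  define D where "D k = (\<Sum>i<q. \<Sum>j<q. \<bar>Ys k $$ (i,j) - L $$ (i,j)\<bar>)" for k
  have "D \<longlonglongrightarrow> (\<Sum>i<q. \<Sum>j<q. \<bar>L $$ (i,j) - L $$ (i,j)\<bar>)"
    unfolding D_def using conv unfolding mat_tendsto_def
    by (intro tendsto_sum tendsto_rabs tendsto_diff tendsto_const) auto
  hence D0: "D \<longlonglongrightarrow> 0" by simp
  have nuc: "(\<lambda>k. nuclear_norm (Ys k)) \<longlonglongrightarrow> nuclear_norm L"
    unfolding psd_nuclear_norm_eq_trace[OF Yp[rule_format]] psd_nuclear_norm_eq_trace[OF Lp]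
    using conv unfolding mat_tendsto_def by (intro tendsto_sum) auto
  have bound: "nuclear_norm L - spectral_norm L \<le>
      (nuclear_norm (Ys k) - spectral_norm (Ys k)) + (nuclear_norm L - nuclear_norm (Ys k)) + D k" for k
    using psd_spectral_norm_le_perturb[OF Yp[rule_format] Lp, of k] unfolding D_def by simp
  have "(\<lambda>k. (nuclear_norm (Ys k) - spectral_norm (Ys k)) + (nuclear_norm L - nuclear_norm (Ys k)) + D k)
      \<longlonglongrightarrow> 0 + (nuclear_norm L - nuclear_norm L) + 0"
    by (intro tendsto_add tendsto_diff g0 nuc D0 tendsto_const)
  hence "nuclear_norm L - spectral_norm L \<le> 0"
    using bound by (intro LIMSEQ_le_const[where a = "nuclear_norm L - spectral_norm L"]) auto
  thus ?thesis using psd_spectral_norm_le_nuclear_norm[OF Lp] by simp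
qed

section \<open>Error bound and exact penalty\<close>

lemma trace_inner_lipschitz:
  assumes C: "C \<in> carrier_mat q q" and Y: "Y \<in> carrier_mat q q" and Z: "Z \<in> carrier_mat q q"
  shows "trace_inner C Z \<le> trace_inner C Y + (\<Sum>i<q. \<Sum>r<q. \<bar>C $$ (r,i)\<bar>) * frob_norm (Y - Z)"
proof -
  have YZ: "Y - Z \<in> carrier_mat q q" by (rule minus_carrier_mat[OF Z])
  have "trace_inner C Z - trace_inner C Y = (\<Sum>i<q. \<Sum>r<q. C $$ (r,i) * (Z $$ (r,i) - Y $$ (r,i)))"
    unfolding trace_inner_entries[OF C Z] trace_inner_entries[OF C Y]
    by (simp add: sum_subtractf[symmetric] algebra_simps)
  also have "\<dots> \<le> (\<Sum>i<q. \<Sum>r<q. \<bar>C $$ (r,i)\<bar> * frob_norm (Y - Z))"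
  proof (intro sum_mono)
    fix i r assume ir: "i \<in> {..<q}" "r \<in> {..<q}"
    have "\<bar>(Y - Z) $$ (r,i)\<bar> \<le> frob_norm (Y - Z)" using abs_entry_le_frob_norm[OF YZ] ir by auto
    hence "\<bar>Z $$ (r,i) - Y $$ (r,i)\<bar> \<le> frob_norm (Y - Z)" using ir Y Z by simp
    hence "\<bar>C $$ (r,i) * (Z $$ (r,i) - Y $$ (r,i))\<bar> \<le> \<bar>C $$ (r,i)\<bar> * frob_norm (Y - Z)"
      by (simp add: abs_mult mult_left_mono)
    thus "C $$ (r,i) * (Z $$ (r,i) - Y $$ (r,i)) \<le> \<bar>C $$ (r,i)\<bar> * frob_norm (Y - Z)" by linarith
  qed
  also have "\<dots> = (\<Sum>i<q. \<Sum>r<q. \<bar>C $$ (r,i)\<bar>) * frob_norm (Y - Z)"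
    by (simp add: sum_distrib_right)
  finally show ?thesis by simp
qed

lemma Omega_set_psd: "Y \<in> Omega_set q A b \<Longrightarrow> Y \<in> psd_cone q"
  unfolding Omega_set_def by auto

lemma Omega_set_carrier: "Y \<in> Omega_set q A b \<Longrightarrow> Y \<in> carrier_mat q q"
  unfolding Omega_set_def psd_cone_def symm_mats_def by auto

lemma Omega_set_rank_le1_iff:
  assumes "Y \<in> Omega_set q A b"
  shows "Y \<in> rank_le1_set q \<longleftrightarrow> nuclear_norm Y - spectral_norm Y = 0"
  using psd_nuclear_eq_spectral_iff_rank_le_1[OF Omega_set_psd[OF assms]] assms
  unfolding rank_le1_set_def Omega_set_def psd_cone_def by auto

lemma Omega_set_seq_compact:
  fixes Ys :: "nat \<Rightarrow> real mat"
  assumes A: "linear_map_Sq q m A" and bounded: "\<exists>B. \<forall>Y \<in> Omega_set q A b. frob_norm Y \<le> B"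
    and Ys: "\<forall>k. Ys k \<in> Omega_set q A b"
  shows "\<exists>r L. strict_mono r \<and> L \<in> Omega_set q A b \<and> mat_tendsto q (Ys \<circ> r) L"
proof -
  obtain B where B: "\<forall>Y \<in> Omega_set q A b. frob_norm Y \<le> B" using bounded by blast
  have "\<forall>k. \<forall>i<q. \<forall>j<q. \<bar>Ys k $$ (i,j)\<bar> \<le> B"
  proof (intro allI impI)
    fix k i j assume "i < q" "j < q"
    hence "\<bar>Ys k $$ (i,j)\<bar> \<le> frob_norm (Ys k)"
      using abs_entry_le_frob_norm[OF Omega_set_carrier] Ys by blast
    also have "\<dots> \<le> B" using B Ys by blast
    finally show "\<bar>Ys k $$ (i,j)\<bar> \<le> B" .
  qed
  from bounded_mat_seq_convergent_subseq[OF this] obtain r L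
    where r: "strict_mono r" and L: "L \<in> carrier_mat q q" and conv: "mat_tendsto q (Ys \<circ> r) L"
    by blast
  have "L \<in> Omega_set q A b" by (rule Omega_set_closed[OF A _ L conv]) (use Ys in simp)
  with r conv show ?thesis by blast
qed

lemma calm_at_tendsto_error_bound:
  assumes calm: "calm_at Psi 0 L" and w: "w \<longlonglongrightarrow> 0"
    and dist: "(\<lambda>k. frob_norm (Ys k - L)) \<longlonglongrightarrow> 0" and mem: "\<And>k. Ys k \<in> Psi (w k)"
  obtains \<alpha> where "\<forall>\<^sub>F k in sequentially. \<exists>Z\<in>Psi 0. frob_norm (Ys k - Z) \<le> \<alpha> * \<bar>w k\<bar>"
proof -
  obtain \<alpha> \<epsilon> \<delta> where \<epsilon>: "\<epsilon> > 0" and \<delta>: "\<delta> > 0"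
    and cl: "\<forall>x. \<bar>x - 0\<bar> < \<epsilon> \<longrightarrow> (\<forall>Y \<in> Psi x. frob_norm (Y - L) < \<delta> \<longrightarrow>
               (\<exists>Z \<in> Psi 0. frob_norm (Y - Z) \<le> \<alpha> * \<bar>x - 0\<bar>))"
    using calm unfolding calm_at_def by blast
  have "\<forall>\<^sub>F k in sequentially. dist (w k) 0 < \<epsilon> \<and> dist (frob_norm (Ys k - L)) 0 < \<delta>"
    using tendstoD[OF w \<epsilon>] tendstoD[OF dist \<delta>] by (rule eventually_conj)
  hence "\<forall>\<^sub>F k in sequentially. \<exists>Z\<in>Psi 0. frob_norm (Ys k - Z) \<le> \<alpha> * \<bar>w k\<bar>"
    by (rule eventually_mono) (use cl mem in \<open>auto simp: dist_real_def\<close>)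
  thus ?thesis by (rule that)
qed

lemma error_bound_violation_seq:
  assumes "\<not> (\<exists>\<kappa>>0. \<forall>Y\<in>K. \<exists>Z\<in>K. g Z = 0 \<and> frob_norm (Y - Z) \<le> \<kappa> * g Y)"
  shows "\<exists>Ys. \<forall>k::nat. Ys k \<in> K \<and> (\<forall>Z\<in>K. g Z = 0 \<longrightarrow> (real k + 1) * g (Ys k) < frob_norm (Ys k - Z))"
proof (rule choice, rule allI)
  fix k :: nat
  have "\<not> (\<forall>Y\<in>K. \<exists>Z\<in>K. g Z = 0 \<and> frob_norm (Y - Z) \<le> (real k + 1) * g Y)"
  proof
    assume "\<forall>Y\<in>K. \<exists>Z\<in>K. g Z = 0 \<and> frob_norm (Y - Z) \<le> (real k + 1) * g Y"
    moreover have "real k + 1 > 0" by simp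
    ultimately show False using assms by blast
  qed
  thus "\<exists>Y. Y \<in> K \<and> (\<forall>Z\<in>K. g Z = 0 \<longrightarrow> (real k + 1) * g Y < frob_norm (Y - Z))"
    by (auto simp: not_le)
qed

lemma mat_tendsto_frob_norm:
  fixes Ys :: "nat \<Rightarrow> real mat"
  assumes "mat_tendsto q Ys L" "\<forall>k. Ys k \<in> carrier_mat q q" "L \<in> carrier_mat q q"
  shows "(\<lambda>k. frob_norm (Ys k - L)) \<longlonglongrightarrow> 0"
proof -
  have "(\<lambda>k. frob_norm (Ys k - L)) \<longlonglongrightarrow> frob_norm (L - L)"
    by (rule frob_norm_diff_tendsto[OF assms assms(3)])
  moreover have "frob_norm (L - L) = 0"
    using frob_norm_entries[of "L - L" q] assms(3) by auto
  ultimately show ?thesis by simp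
qed

text \<open>Calmness only gives a local error bound near each zero of g; compactness of K turns it
  into a global one: a sequence violating the bound with constants k + 1 has a limit point,
  necessarily a zero of g, at which calmness fails.\<close>
lemma calm_global_error_bound:
  fixes K :: "real mat set" and g :: "real mat \<Rightarrow> real"
  assumes compact: "\<And>Ys :: nat \<Rightarrow> real mat. \<forall>k. Ys k \<in> K \<Longrightarrow> \<exists>r L. strict_mono r \<and> L \<in> K \<and> mat_tendsto q (Ys \<circ> r) L"
    and carrier: "K \<subseteq> carrier_mat q q"
    and nonneg: "\<And>Y. Y \<in> K \<Longrightarrow> 0 \<le> g Y"
    and zero_closed: "\<And>Ys L. \<forall>k. Ys k \<in> K \<Longrightarrow> L \<in> K \<Longrightarrow> mat_tendsto q Ys L \<Longrightarrow>
                        (\<lambda>k. g (Ys k)) \<longlonglongrightarrow> 0 \<Longrightarrow> g L = 0"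
    and Z': "Z' \<in> K" "g Z' = 0"
    and calm: "\<And>L. L \<in> K \<Longrightarrow> g L = 0 \<Longrightarrow> calm_at (\<lambda>w. {Y \<in> K. g Y = w}) 0 L"
  shows "\<exists>\<kappa>>0. \<forall>Y\<in>K. \<exists>Z\<in>K. g Z = 0 \<and> frob_norm (Y - Z) \<le> \<kappa> * g Y"
proof (rule ccontr)
  assume "\<not> ?thesis"
  from error_bound_violation_seq[OF this] obtain Ys
    where "\<forall>k. Ys k \<in> K \<and> (\<forall>Z\<in>K. g Z = 0 \<longrightarrow> (real k + 1) * g (Ys k) < frob_norm (Ys k - Z))"
    by blast
  hence Ys: "\<And>k. Ys k \<in> K"
    and far: "\<And>k Z. Z \<in> K \<Longrightarrow> g Z = 0 \<Longrightarrow> (real k + 1) * g (Ys k) < frob_norm (Ys k - Z)"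
    by blast+
  obtain r L where r: "strict_mono r" and L: "L \<in> K" and conv: "mat_tendsto q (Ys \<circ> r) L"
    using compact[of Ys] Ys by blast
  define Y' where "Y' = Ys \<circ> r"
  have Y': "\<forall>k. Y' k \<in> K" and Y'c: "\<forall>k. Y' k \<in> carrier_mat q q"
    using Ys carrier unfolding Y'_def by auto
  have "(\<lambda>k. frob_norm (Y' k - Z')) \<longlonglongrightarrow> frob_norm (L - Z')"
    using frob_norm_diff_tendsto[OF conv[folded Y'_def] Y'c] carrier L Z' by auto
  moreover have "(\<lambda>k. inverse (real (Suc (r k)))) \<longlonglongrightarrow> 0"
    using LIMSEQ_subseq_LIMSEQ[OF LIMSEQ_inverse_real_of_nat r] by (simp add: o_def)
  ultimately have "(\<lambda>k. frob_norm (Y' k - Z') * inverse (real (Suc (r k)))) \<longlonglongrightarrow> frob_norm (L - Z') * 0"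
    by (rule tendsto_mult)
  hence bound0: "(\<lambda>k. frob_norm (Y' k - Z') * inverse (real (Suc (r k)))) \<longlonglongrightarrow> 0" by simp
  have bounds: "0 \<le> g (Y' k)" "g (Y' k) \<le> frob_norm (Y' k - Z') * inverse (real (Suc (r k)))" for k
    using nonneg[OF Y'[rule_format]] far[OF Z', of "r k"] by (simp_all add: Y'_def field_simps)
  have g0: "(\<lambda>k. g (Y' k)) \<longlonglongrightarrow> 0"
    by (rule real_tendsto_sandwich[OF _ _ tendsto_const bound0]) (use bounds in \<open>auto intro: always_eventually\<close>)
  have gL: "g L = 0" by (rule zero_closed[OF Y' L conv[folded Y'_def] g0])
  have dist: "(\<lambda>k. frob_norm (Y' k - L)) \<longlonglongrightarrow> 0"
    using mat_tendsto_frob_norm[OF conv[folded Y'_def] Y'c] carrier L by auto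
  have mem: "Y' k \<in> {Y \<in> K. g Y = g (Y' k)}" for k using Y' by simp
  obtain \<alpha> where "\<forall>\<^sub>F k in sequentially. \<exists>Z\<in>{Y \<in> K. g Y = 0}. frob_norm (Y' k - Z) \<le> \<alpha> * \<bar>g (Y' k)\<bar>"
    by (rule calm_at_tendsto_error_bound[OF calm[OF L gL] g0 dist mem])
  then obtain N where N: "\<And>k. k \<ge> N \<Longrightarrow> \<exists>Z\<in>{Y \<in> K. g Y = 0}. frob_norm (Y' k - Z) \<le> \<alpha> * \<bar>g (Y' k)\<bar>"
    unfolding eventually_sequentially by blast
  obtain M :: nat where M: "\<alpha> \<le> real M" using real_arch_simple by blast
  define k where "k = max N M"
  obtain Z where Z: "Z \<in> K" "g Z = 0" and near: "frob_norm (Y' k - Z) \<le> \<alpha> * \<bar>g (Y' k)\<bar>"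
    using N[of k] unfolding k_def by auto
  have abs_g: "\<bar>g (Y' k)\<bar> = g (Y' k)" using nonneg Y' by simp
  have "M \<le> r k" using seq_suble[OF r, of k] unfolding k_def by linarith
  hence "\<alpha> * g (Y' k) \<le> (real (r k) + 1) * g (Y' k)"
    using M nonneg Y' by (intro mult_right_mono) auto
  also have "\<dots> < frob_norm (Y' k - Z)" using far[OF Z] unfolding Y'_def by simp
  finally show False using near abs_g by simp
qed

lemma Omega_set_error_bound:
  assumes A: "linear_map_Sq q m A"
    and bounded: "\<exists>B. \<forall>Y \<in> Omega_set q A b. frob_norm Y \<le> B"
    and inter: "Omega_set q A b \<inter> rank_le1_set q \<noteq> {}"
    and calm: "\<forall>Y \<in> {Y \<in> Omega_set q A b. nuclear_norm Y - spectral_norm Y = 0}.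
                 calm_at (\<lambda>w. {Y \<in> Omega_set q A b. nuclear_norm Y - spectral_norm Y = w}) 0 Y"
  shows "\<exists>\<kappa>>0. \<forall>Y\<in>Omega_set q A b. \<exists>Z\<in>Omega_set q A b.
           nuclear_norm Z - spectral_norm Z = 0 \<and> frob_norm (Y - Z) \<le> \<kappa> * (nuclear_norm Y - spectral_norm Y)"
proof -
  let ?O = "Omega_set q A b" and ?g = "\<lambda>Y. nuclear_norm Y - spectral_norm Y"
  obtain Z0 where Z0O: "Z0 \<in> ?O" and "Z0 \<in> rank_le1_set q" using inter by blast
  hence Z0: "Z0 \<in> ?O" "?g Z0 = 0" using Omega_set_rank_le1_iff[OF Z0O] by simp_all
  show ?thesis
  proof (rule calm_global_error_bound[where q = q and Z' = Z0])
    show "\<exists>r L. strict_mono r \<and> L \<in> ?O \<and> mat_tendsto q (Ys \<circ> r) L"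
      if "\<forall>k. Ys k \<in> ?O" for Ys :: "nat \<Rightarrow> real mat"
      by (rule Omega_set_seq_compact[OF A bounded that])
    show "?g L = 0"
      if "\<forall>k. Ys k \<in> ?O" "L \<in> ?O" "mat_tendsto q Ys L" "(\<lambda>k. ?g (Ys k)) \<longlonglongrightarrow> 0" for Ys L
      by (rule psd_rank_gap_limit[OF _ Omega_set_psd[OF that(2)] that(3,4)]) (use that(1) Omega_set_psd in blast)
    show "calm_at (\<lambda>w. {Y \<in> ?O. ?g Y = w}) 0 L" if "L \<in> ?O" "?g L = 0" for L
      using calm that by blast
    show "?O \<subseteq> carrier_mat q q" using Omega_set_carrier by blast
    show "0 \<le> ?g Y" if "Y \<in> ?O" for Y
      using psd_spectral_norm_le_nuclear_norm[OF Omega_set_psd[OF that]] by simp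
  qed (use Z0 in auto)
qed

lemma Omega_set_objective_error_bound:
  assumes A: "linear_map_Sq q m A"
    and bounded: "\<exists>B. \<forall>Y \<in> Omega_set q A b. frob_norm Y \<le> B"
    and inter: "Omega_set q A b \<inter> rank_le1_set q \<noteq> {}"
    and calm: "\<forall>Y \<in> {Y \<in> Omega_set q A b. nuclear_norm Y - spectral_norm Y = 0}.
                 calm_at (\<lambda>w. {Y \<in> Omega_set q A b. nuclear_norm Y - spectral_norm Y = w}) 0 Y"
    and C: "C \<in> carrier_mat q q"
  obtains c where "0 \<le> c"
    and "\<And>Y. Y \<in> Omega_set q A b \<Longrightarrow> \<exists>Z\<in>Omega_set q A b. nuclear_norm Z - spectral_norm Z = 0 \<and>
           trace_inner C Z \<le> trace_inner C Y + c * (nuclear_norm Y - spectral_norm Y)"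
proof -
  let ?O = "Omega_set q A b" and ?g = "\<lambda>Y. nuclear_norm Y - spectral_norm Y"
  obtain \<kappa> where "\<kappa> > 0" and eb: "\<forall>Y\<in>?O. \<exists>Z\<in>?O. ?g Z = 0 \<and> frob_norm (Y - Z) \<le> \<kappa> * ?g Y"
    using Omega_set_error_bound[OF A bounded inter calm] by blast
  define c where "c = (\<Sum>i<q. \<Sum>r<q. \<bar>C $$ (r,i)\<bar>) * \<kappa>"
  have "0 \<le> c" unfolding c_def using \<open>\<kappa> > 0\<close> by (simp add: sum_nonneg)
  moreover have "\<exists>Z\<in>?O. ?g Z = 0 \<and> trace_inner C Z \<le> trace_inner C Y + c * ?g Y" if Y: "Y \<in> ?O" for Y
  proof -
    obtain Z where Z: "Z \<in> ?O" "?g Z = 0" "frob_norm (Y - Z) \<le> \<kappa> * ?g Y" using eb Y by blast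
    have "trace_inner C Z \<le> trace_inner C Y + (\<Sum>i<q. \<Sum>r<q. \<bar>C $$ (r,i)\<bar>) * frob_norm (Y - Z)"
      by (rule trace_inner_lipschitz[OF C Omega_set_carrier[OF Y] Omega_set_carrier[OF Z(1)]])
    also have "\<dots> \<le> trace_inner C Y + c * ?g Y"
      using Z(3) unfolding c_def mult.assoc by (intro add_left_mono mult_left_mono) (auto intro: sum_nonneg)
    finally show ?thesis using Z by blast
  qed
  ultimately show ?thesis by (rule that)
qed

lemma exact_penalty:
  fixes f g :: "real mat \<Rightarrow> real"
  assumes nonneg: "\<And>Y. Y \<in> K \<Longrightarrow> 0 \<le> g Y"
    and error: "\<And>Y. Y \<in> K \<Longrightarrow> \<exists>Z\<in>K. g Z = 0 \<and> f Z \<le> f Y + c * g Y"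
    and rho: "c < \<rho>"
  shows "is_min_on f {Y \<in> K. g Y = 0} Ystar \<longleftrightarrow> is_min_on (\<lambda>Y. f Y + \<rho> * g Y) K Ystar"
proof
  assume "is_min_on f {Y \<in> K. g Y = 0} Ystar"
  hence Ys: "Ystar \<in> K" "g Ystar = 0" and minimal: "\<And>Z. Z \<in> K \<Longrightarrow> g Z = 0 \<Longrightarrow> f Ystar \<le> f Z"
    unfolding is_min_on_def by auto
  have "f Ystar + \<rho> * g Ystar \<le> f Y + \<rho> * g Y" if Y: "Y \<in> K" for Y
  proof -
    obtain Z where Z: "Z \<in> K" "g Z = 0" "f Z \<le> f Y + c * g Y" using error[OF Y] by blast
    have "f Ystar \<le> f Y + c * g Y" using minimal[OF Z(1,2)] Z(3) by simp
    also have "\<dots> \<le> f Y + \<rho> * g Y" using rho nonneg[OF Y] by (intro add_left_mono mult_right_mono) auto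
    finally show ?thesis using Ys by simp
  qed
  thus "is_min_on (\<lambda>Y. f Y + \<rho> * g Y) K Ystar" unfolding is_min_on_def using Ys by blast
next
  assume "is_min_on (\<lambda>Y. f Y + \<rho> * g Y) K Ystar"
  hence Ys: "Ystar \<in> K" and minimal: "\<And>Z. Z \<in> K \<Longrightarrow> f Ystar + \<rho> * g Ystar \<le> f Z + \<rho> * g Z"
    unfolding is_min_on_def by auto
  obtain Z where Z: "Z \<in> K" "g Z = 0" "f Z \<le> f Ystar + c * g Ystar" using error[OF Ys] by blast
  have "f Ystar + \<rho> * g Ystar \<le> f Ystar + c * g Ystar" using minimal[OF Z(1)] Z(2,3) by simp
  hence "(\<rho> - c) * g Ystar \<le> 0" by (simp add: algebra_simps)
  hence g0: "g Ystar = 0" using rho nonneg[OF Ys] by (simp add: mult_le_0_iff)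
  have "f Ystar \<le> f Z'" if "Z' \<in> K" "g Z' = 0" for Z'
    using minimal[OF that(1)] that(2) g0 by simp
  thus "is_min_on f {Y \<in> K. g Y = 0} Ystar" unfolding is_min_on_def using Ys g0 by blast
qed

theorem proposition2:
  fixes q m :: nat and Cbar :: "real mat" and A :: "real mat \<Rightarrow> real vec" and b :: "real vec"
  assumes Cbar: "Cbar \<in> symm_mats q"
    and A: "linear_map_Sq q m A"
    and b: "b \<in> carrier_vec m"
    and nonempty: "Omega_set q A b \<noteq> {}"
    and bounded: "\<exists>B. \<forall>Y \<in> Omega_set q A b. frob_norm Y \<le> B"
    and inter: "Omega_set q A b \<inter> rank_le1_set q \<noteq> {}"
    and calm: "\<forall>Y \<in> {Y \<in> Omega_set q A b. nuclear_norm Y - spectral_norm Y = 0}.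
                 calm_at (\<lambda>w. {Y \<in> Omega_set q A b. nuclear_norm Y - spectral_norm Y = w}) 0 Y"
  shows "\<exists>\<rho>b>0. \<forall>\<rho>>\<rho>b. \<forall>Ystar.
           is_min_on (\<lambda>Y. trace_inner Cbar Y) (Omega_set q A b \<inter> rank_le1_set q) Ystar
           \<longleftrightarrow> is_min_on (\<lambda>Y. trace_inner Cbar Y + \<rho> * (nuclear_norm Y - spectral_norm Y))
                 (Omega_set q A b) Ystar"
proof -
  let ?O = "Omega_set q A b" and ?g = "\<lambda>Y. nuclear_norm Y - spectral_norm Y"
  have Cc: "Cbar \<in> carrier_mat q q" using Cbar unfolding symm_mats_def by simp
  have gnn: "\<And>Y. Y \<in> ?O \<Longrightarrow> 0 \<le> ?g Y"
    using psd_spectral_norm_le_nuclear_norm[OF Omega_set_psd] by simp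
  have zero_set: "{Y \<in> ?O. ?g Y = 0} = ?O \<inter> rank_le1_set q" by (auto simp: Omega_set_rank_le1_iff)
  show ?thesis
  proof (rule Omega_set_objective_error_bound[OF A bounded inter calm Cc])
    fix c assume "0 \<le> c"
      and error: "\<And>Y. Y \<in> ?O \<Longrightarrow> \<exists>Z\<in>?O. ?g Z = 0 \<and> trace_inner Cbar Z \<le> trace_inner Cbar Y + c * ?g Y"
    have penalty: "is_min_on (\<lambda>Y. trace_inner Cbar Y) (?O \<inter> rank_le1_set q) Ystar
        \<longleftrightarrow> is_min_on (\<lambda>Y. trace_inner Cbar Y + \<rho> * ?g Y) ?O Ystar" if "c + 1 < \<rho>" for \<rho> Ystar
    proof -
      have "c < \<rho>" using that by simp
      from exact_penalty[OF gnn error this] show ?thesis unfolding zero_set .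
    qed
    show ?thesis
    proof (intro exI[of _ "c + 1"] conjI allI impI)
      show "0 < c + 1" using \<open>0 \<le> c\<close> by simp
    qed (rule penalty)
  qed
qed

end
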